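(* For parameters $(x_1,x_2,\xi_1,\xi_2)\in\mathbb{R}^{4n}$ consider the first-order differential operator on $L^2(\mathbb{R}_t)$ $$\tilde P=iD_t+a(t,\xi_2,\xi_1+t\xi_2)F(x_2-tx_1).$$ There exists a constant $C>0$ such that for all $u\in\mathscr S(\mathbb{R}_t)$ and all $(x_1,x_2,\xi_1,\xi_2)\in\mathbb{R}^{4n}$, $$\big\|(1+\langle x_1\rangle^{\frac{2\sigma}{2\sigma+1}}+\langle x_2-tx_1\rangle^{2\sigma})u\big\|_{L^2(\mathbb{R}_t)}\le C\big(\|\tilde Pu\|_{L^2(\mathbb{R}_t)}+\|u\|_{L^2(\mathbb{R}_t)}\big).$$
   Context: $0<\sigma<1$, $n\ge1$. $a\in C_b^\infty(\mathbb{R}^{2n+1})$ (smooth, all derivatives bounded) with $a(t,\xi,\eta)\ge a_0>0$ for all $(t,\xi,\eta)\in\mathbb{R}\times\mathbb{R}^n\times\mathbb{R}^n$. $w\in C^\infty(\mathbb{R}^n)$ with $0\le w\le1$, $w=1$ on $\{|\eta|\ge2\}$, $w=0$ on $\{|\eta|\le1\}$, and $F(x)=|x|^{2\sigma}w(x)+|x|^2(1-w(x))$. $D_t=(2\pi i)^{-1}\partial_t$, $\langle x\rangle=(1+|x|^2)^{1/2}$. In the estimate, $\langle x_2-tx_1\rangle^{2\sigma}$ acts as multiplication by a function of $t$. *)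

theory Defs
  imports "HOL-Analysis.Analysis"
begin

fun iter_dderiv :: "('a::real_normed_vector \<Rightarrow> 'b::real_normed_vector) \<Rightarrow> 'a list \<Rightarrow> 'a \<Rightarrow> 'b" where
  "iter_dderiv f [] = f"
| "iter_dderiv f (v # vs) = (\<lambda>x. frechet_derivative (iter_dderiv f vs) (at x) v)"

definition smooth_fun :: "('a::euclidean_space \<Rightarrow> 'b::real_normed_vector) \<Rightarrow> bool" where
  "smooth_fun f \<longleftrightarrow> (\<forall>vs. set vs \<subseteq> Basis \<longrightarrow> (\<forall>x. iter_dderiv f vs differentiable (at x)))"

definition Cb_inf :: "('a::euclidean_space \<Rightarrow> 'b::real_normed_vector) \<Rightarrow> bool" where
  "Cb_inf f \<longleftrightarrow> smooth_fun f \<and> (\<forall>vs. set vs \<subseteq> Basis \<longrightarrow> bounded (range (iter_dderiv f vs)))"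

definition vderiv :: "(real \<Rightarrow> complex) \<Rightarrow> real \<Rightarrow> complex" where
  "vderiv u = (\<lambda>t. vector_derivative u (at t))"

definition schwartz :: "(real \<Rightarrow> complex) \<Rightarrow> bool" where
  "schwartz u \<longleftrightarrow> (\<forall>k t. ((vderiv ^^ k) u) differentiable (at t)) \<and>
     (\<forall>k m. bounded (range (\<lambda>t::real. of_real (\<bar>t\<bar> ^ m) * (vderiv ^^ k) u t)))"

definition L2norm :: "(real \<Rightarrow> complex) \<Rightarrow> real" where
  "L2norm f = sqrt (integral\<^sup>L lborel (\<lambda>t. (cmod (f t))\<^sup>2))"

definition jbr :: "'a::real_normed_vector \<Rightarrow> real" where
  "jbr x = sqrt (1 + (norm x)\<^sup>2)"

definition Ffun :: "real \<Rightarrow> (real^'n \<Rightarrow> real) \<Rightarrow> real^'n \<Rightarrow> real" where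
  "Ffun \<sigma> w x = norm x powr (2*\<sigma>) * w x + (norm x)\<^sup>2 * (1 - w x)"

text \<open>D_t = (2 pi i)^{-1} d/dt; the operator P~ = i D_t + a(t,xi2,xi1+t xi2) F(x2 - t x1).\<close>
definition Ptilde :: "real \<Rightarrow> (real \<Rightarrow> real^'n \<Rightarrow> real^'n \<Rightarrow> real) \<Rightarrow> (real^'n \<Rightarrow> real)
    \<Rightarrow> real^'n \<Rightarrow> real^'n \<Rightarrow> real^'n \<Rightarrow> real^'n \<Rightarrow> (real \<Rightarrow> complex) \<Rightarrow> real \<Rightarrow> complex" where
  "Ptilde \<sigma> a w x1 x2 \<xi>1 \<xi>2 u t =
     \<i> * (vderiv u t / (2 * complex_of_real pi * \<i>))
     + complex_of_real (a t \<xi>2 (\<xi>1 + t *\<^sub>R \<xi>2) * Ffun \<sigma> w (x2 - t *\<^sub>R x1)) * u t"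

end

theory Submission
  imports Defs "HOL-Real_Asymp.Real_Asymp"
begin

(* Write U = |u|^2, PU = |P u|^2, J = Re(conj u * P u).

   The only tool is an energy identity: for a real weight phi of polynomial growth,
   integrating (phi |u|^2)' over the line gives
     integral (phi' U + 4 pi phi J - 4 pi phi b U) = 0.
   Choosing phi so that -phi' + 4 pi phi b is large, and absorbing 4 pi phi J by
   Cauchy-Schwarz, yields weighted bounds for U in terms of U and PU:
   (1) phi = 2 - arctan(R (t - t0)) / 2 with R = max 1 |x1| ^ (2s/(2s+1)) and t0 the
       point of the line t x1 closest to x2 gives  R^2 U <= C (PU + U) + (null term);
   (2) phi = (rho^2 + |x2 - t x1|^2)^s with rho ~ |x1|^(1/(2s+1)) gives
       <x2 - t x1>^(4s) U <= C (U + R^2 U + PU) + (null term).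
   Adding these and integrating proves the theorem with a constant depending only on
   s and the lower bound a0 of a. *)

lemma integrable_inverse_one_plus_square: "integrable lborel (\<lambda>t::real. inverse (1 + t\<^sup>2))"
proof -
  have "set_integrable lborel (einterval (-\<infinity>) \<infinity>) (\<lambda>t::real. inverse (1 + t\<^sup>2))"
  proof (rule interval_integral_FTC_nonneg(1)[where F=arctan and A="-pi/2" and B="pi/2"])
    show "\<And>t. DERIV arctan t :> inverse (1 + t\<^sup>2)"
      by (auto intro!: derivative_eq_intros simp: field_simps)
    show "\<And>t. isCont (\<lambda>t::real. inverse (1 + t\<^sup>2)) t"
      by (intro continuous_intros) (auto simp: add_nonneg_eq_0_iff)
    show "((arctan \<circ> real_of_ereal) \<longlongrightarrow> - pi / 2) (at_right (- \<infinity>))"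
      unfolding ereal_tendsto_simps using tendsto_arctan_at_bot by simp
    show "((arctan \<circ> real_of_ereal) \<longlongrightarrow> pi / 2) (at_left \<infinity>)"
      unfolding ereal_tendsto_simps using tendsto_arctan_at_top by simp
  qed auto
  then show ?thesis by (simp add: set_integrable_def)
qed

lemma integrable_by_inverse_square_bound:
  fixes f :: "real \<Rightarrow> real"
  assumes "continuous_on UNIV f" and "\<And>t. \<bar>f t\<bar> \<le> K / (1 + t\<^sup>2)"
  shows "integrable lborel f"
proof (rule Bochner_Integration.integrable_bound
         [OF integrable_mult_right[OF integrable_inverse_one_plus_square, of K]])
  show "f \<in> borel_measurable lborel"
    using assms(1) borel_measurable_continuous_onI by simp
  show "AE t in lborel. norm (f t) \<le> norm (K * inverse (1 + t\<^sup>2))"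
    using assms(2) by (auto simp: divide_inverse intro!: AE_I2 order.trans[OF _ abs_ge_self])
qed

lemma square_le_of_decay:
  fixes p c M L x :: real
  assumes "p \<ge> 1" "0 \<le> c" "c \<le> M / p\<^sup>2" "0 \<le> L" "0 \<le> x" "x \<le> L * p * c"
  shows "x\<^sup>2 \<le> (L * M)\<^sup>2 / p"
proof -
  have "x\<^sup>2 \<le> (L * p * c)\<^sup>2" using assms by (intro power_mono) auto
  also have "\<dots> \<le> (L * p * (M / p\<^sup>2))\<^sup>2" using assms by (intro power_mono mult_left_mono) auto
  also have "\<dots> = (L * M)\<^sup>2 / p\<^sup>2" using assms by (simp add: field_simps power2_eq_square)
  also have "\<dots> \<le> (L * M)\<^sup>2 / p"
    using assms(1) by (intro divide_left_mono) (auto simp: power2_eq_square)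
  finally show ?thesis .
qed

lemma schwartz_differentiable:
  assumes "schwartz u"
  shows "u differentiable (at t)" and "vderiv u differentiable (at t)"
proof -
  have "\<forall>k t. ((vderiv ^^ k) u) differentiable (at t)"
    using assms unfolding schwartz_def by blast
  from this[rule_format, of 0 t] this[rule_format, of 1 t]
  show "u differentiable (at t)" "vderiv u differentiable (at t)" by auto
qed

lemma schwartz_has_vector_derivative:
  assumes "schwartz u"
  shows "(u has_vector_derivative vderiv u t) (at t)"
  using schwartz_differentiable(1)[OF assms] by (simp add: vderiv_def vector_derivative_works[symmetric])

lemma schwartz_continuous:
  assumes "schwartz u"
  shows "continuous_on UNIV u" and "continuous_on UNIV (vderiv u)"
  using schwartz_differentiable[OF assms]
  by (simp_all add: continuous_at_imp_continuous_on differentiable_imp_continuous_within)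

(* Every derivative of a Schwartz function decays like (1 + t^2)^-2: combine the bounds on
   |t|^0 |u^(k)| and |t|^4 |u^(k)| using (1 + t^2)^2 <= 2 + 2 |t|^4. *)
lemma schwartz_derivative_decay:
  assumes "schwartz u"
  obtains M where "\<And>t. cmod ((vderiv ^^ k) u t) \<le> M / (1 + t\<^sup>2)\<^sup>2"
proof -
  have moment: "\<exists>B. \<forall>t. \<bar>t\<bar> ^ m * cmod ((vderiv ^^ k) u t) \<le> B" for m
  proof -
    have "bounded (range (\<lambda>t::real. of_real (\<bar>t\<bar> ^ m) * (vderiv ^^ k) u t))"
      using assms unfolding schwartz_def by blast
    then obtain B where "\<forall>t. norm (of_real (\<bar>t\<bar> ^ m) * (vderiv ^^ k) u t) \<le> B"
      by (auto simp: bounded_iff)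
    then show ?thesis by (auto simp: norm_mult norm_power)
  qed
  obtain B0 where B0: "\<And>t. \<bar>t\<bar> ^ 0 * cmod ((vderiv ^^ k) u t) \<le> B0" using moment by blast
  obtain B4 where B4: "\<And>t. \<bar>t\<bar> ^ 4 * cmod ((vderiv ^^ k) u t) \<le> B4" using moment by blast
  have "cmod ((vderiv ^^ k) u t) \<le> (2 * B0 + 2 * B4) / (1 + t\<^sup>2)\<^sup>2" for t
  proof -
    let ?z = "cmod ((vderiv ^^ k) u t)"
    have "\<bar>t\<bar> ^ 4 = (t\<^sup>2)\<^sup>2" by (simp add: power_even_abs_numeral flip: power_mult)
    then have "(1 + t\<^sup>2)\<^sup>2 \<le> 2 + 2 * \<bar>t\<bar> ^ 4"
      using zero_le_power2[of "t\<^sup>2 - 1"] by (simp add: power2_eq_square algebra_simps)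
    then have "(1 + t\<^sup>2)\<^sup>2 * ?z \<le> (2 + 2 * \<bar>t\<bar> ^ 4) * ?z"
      by (rule mult_right_mono) simp
    also have "\<dots> = 2 * (\<bar>t\<bar> ^ 0 * ?z) + 2 * (\<bar>t\<bar> ^ 4 * ?z)" by (simp add: algebra_simps)
    also have "\<dots> \<le> 2 * B0 + 2 * B4" using B0[of t] B4[of t] by linarith
    finally have "(1 + t\<^sup>2)\<^sup>2 * ?z \<le> 2 * B0 + 2 * B4" .
    moreover have "(1 + t\<^sup>2)\<^sup>2 > 0" using zero_le_power2[of t] by (intro zero_less_power) linarith
    ultimately show ?thesis by (metis pos_le_divide_eq mult.commute)
  qed
  then show ?thesis by (rule that)
qed

lemma schwartz_decay:
  assumes "schwartz u"
  obtains M where "\<And>t. cmod (u t) \<le> M / (1 + t\<^sup>2)\<^sup>2"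
    and "\<And>t. cmod (vderiv u t) \<le> M / (1 + t\<^sup>2)\<^sup>2"
proof -
  obtain M0 where M0: "\<And>t. cmod ((vderiv ^^ 0) u t) \<le> M0 / (1 + t\<^sup>2)\<^sup>2"
    using schwartz_derivative_decay[OF assms] by blast
  obtain M1 where M1: "\<And>t. cmod ((vderiv ^^ 1) u t) \<le> M1 / (1 + t\<^sup>2)\<^sup>2"
    using schwartz_derivative_decay[OF assms] by blast
  let ?M = "max 0 (max M0 M1)"
  have le: "c / (1 + t\<^sup>2)\<^sup>2 \<le> ?M / (1 + t\<^sup>2)\<^sup>2" if "c \<le> ?M" for c t
    using that by (intro divide_right_mono) auto
  show ?thesis
  proof (rule that)
    show "cmod (u t) \<le> ?M / (1 + t\<^sup>2)\<^sup>2" for t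
      using order.trans[OF M0[of t] le[of M0 t]] by simp
    show "cmod (vderiv u t) \<le> ?M / (1 + t\<^sup>2)\<^sup>2" for t
      using order.trans[OF M1[of t] le[of M1 t]] by simp
  qed
qed

section \<open>The energy identity\<close>

lemma energy_density_bound:
  fixes z d :: complex and f f' K M p :: real
  assumes p: "p \<ge> 1" and f: "\<bar>f\<bar> \<le> K * p" and f': "\<bar>f'\<bar> \<le> K * p"
    and z: "cmod z \<le> M / p\<^sup>2" and d: "cmod d \<le> M / p\<^sup>2"
  shows "\<bar>f' * (cmod z)\<^sup>2 + 2 * f * (Re z * Re d + Im z * Im d)\<bar> \<le> 5 * K * M\<^sup>2 / p"
    and "\<bar>f * (cmod z)\<^sup>2\<bar> \<le> K * M\<^sup>2 / p"
proof -
  have "0 \<le> K * p" using f by linarith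
  then have K: "K \<ge> 0" using p by (simp add: zero_le_mult_iff)
  have Mp: "0 \<le> M / p\<^sup>2" using order.trans[OF norm_ge_zero z] .
  have cube: "X / p ^ 3 \<le> X / p" if "X \<ge> 0" for X
    using that p by (intro divide_left_mono) (auto simp: power3_eq_cube intro!: order.trans[OF p]
        mult_mono[of 1 _ 1, simplified])
  have z2: "(cmod z)\<^sup>2 \<le> (M / p\<^sup>2)\<^sup>2" using z by (intro power_mono) auto
  have zd: "cmod z * cmod d \<le> (M / p\<^sup>2) * (M / p\<^sup>2)" using z d Mp by (intro mult_mono) auto
  have "\<bar>Re z * Re d + Im z * Im d\<bar> \<le> \<bar>Re z\<bar> * \<bar>Re d\<bar> + \<bar>Im z\<bar> * \<bar>Im d\<bar>"
    by (simp add: abs_mult[symmetric])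
  also have "\<dots> \<le> cmod z * cmod d + cmod z * cmod d"
    by (intro add_mono mult_mono abs_Re_le_cmod abs_Im_le_cmod) auto
  finally have cross: "\<bar>Re z * Re d + Im z * Im d\<bar> \<le> 2 * ((M / p\<^sup>2) * (M / p\<^sup>2))"
    using zd by linarith
  have "\<bar>f' * (cmod z)\<^sup>2 + 2 * f * (Re z * Re d + Im z * Im d)\<bar>
      \<le> \<bar>f'\<bar> * (cmod z)\<^sup>2 + 2 * \<bar>f\<bar> * \<bar>Re z * Re d + Im z * Im d\<bar>"
    by (rule order.trans[OF abs_triangle_ineq]) (simp add: abs_mult)
  also have "\<dots> \<le> (K * p) * (M / p\<^sup>2)\<^sup>2 + 2 * (K * p) * (2 * ((M / p\<^sup>2) * (M / p\<^sup>2)))"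
    using f f' z2 cross K p Mp by (intro add_mono mult_mono mult_left_mono) auto
  also have "\<dots> = 5 * K * M\<^sup>2 / p ^ 3" using p by (simp add: field_simps power2_eq_square power3_eq_cube)
  finally show "\<bar>f' * (cmod z)\<^sup>2 + 2 * f * (Re z * Re d + Im z * Im d)\<bar> \<le> 5 * K * M\<^sup>2 / p"
    using cube[of "5 * K * M\<^sup>2"] K by simp
  have "\<bar>f * (cmod z)\<^sup>2\<bar> \<le> (K * p) * (M / p\<^sup>2)\<^sup>2"
    using f z2 K p by (auto simp: abs_mult intro!: mult_mono)
  also have "\<dots> = K * M\<^sup>2 / p ^ 3" using p by (simp add: field_simps power2_eq_square power3_eq_cube)
  finally show "\<bar>f * (cmod z)\<^sup>2\<bar> \<le> K * M\<^sup>2 / p"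
    using cube[of "K * M\<^sup>2"] K by simp
qed

(* Energy identity: the energy density E = (phi |u|^2)' is integrable with integral zero,
   because phi |u|^2 vanishes at both ends of the line. *)
lemma energy_identity:
  fixes u :: "real \<Rightarrow> complex" and \<phi> \<phi>' :: "real \<Rightarrow> real"
  assumes u: "schwartz u"
    and d\<phi>: "\<And>t. (\<phi> has_real_derivative \<phi>' t) (at t)" and c\<phi>': "continuous_on UNIV \<phi>'"
    and \<phi>_growth: "\<And>t. \<bar>\<phi> t\<bar> \<le> K * (1 + t\<^sup>2)" and \<phi>'_growth: "\<And>t. \<bar>\<phi>' t\<bar> \<le> K * (1 + t\<^sup>2)"
  defines "E \<equiv> \<lambda>t. \<phi>' t * (cmod (u t))\<^sup>2
                   + 2 * \<phi> t * (Re (u t) * Re (vderiv u t) + Im (u t) * Im (vderiv u t))"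
  shows "integrable lborel E" and "integral\<^sup>L lborel E = 0"
proof -
  define Q where "Q = (\<lambda>t. \<phi> t * ((Re (u t))\<^sup>2 + (Im (u t))\<^sup>2))"
  obtain M where M: "\<And>t. cmod (u t) \<le> M / (1 + t\<^sup>2)\<^sup>2" "\<And>t. cmod (vderiv u t) \<le> M / (1 + t\<^sup>2)\<^sup>2"
    using schwartz_decay[OF u] by metis
  note bounds = energy_density_bound[OF _ \<phi>_growth \<phi>'_growth M(1) M(2)]
  have Q_deriv: "(Q has_real_derivative E t) (at t)" for t
    unfolding Q_def E_def
    by (rule derivative_eq_intros d\<phi> has_field_derivative_Re has_field_derivative_Im
          schwartz_has_vector_derivative[OF u] refl)+
       (simp add: cmod_power2 algebra_simps)
  have c\<phi>: "continuous_on UNIV \<phi>"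
    using d\<phi> by (meson DERIV_isCont continuous_at_imp_continuous_on)
  have cE: "continuous_on UNIV E"
    unfolding E_def by (intro continuous_intros c\<phi> c\<phi>' schwartz_continuous[OF u])
  have "\<bar>E t\<bar> \<le> 5 * K * M\<^sup>2 / (1 + t\<^sup>2)" for t
    unfolding E_def by (rule bounds(1)) simp
  then have intE: "integrable lborel E" by (rule integrable_by_inverse_square_bound[OF cE])
  have Q_lim: "(Q \<longlongrightarrow> 0) F" if "F = at_top \<or> F = at_bot" for F
  proof (rule Lim_null_comparison)
    have "norm (Q t) \<le> K * M\<^sup>2 / (1 + t\<^sup>2)" for t
      unfolding Q_def cmod_power2[symmetric] real_norm_def by (rule bounds(2)) simp
    then show "\<forall>\<^sub>F t in F. norm (Q t) \<le> K * M\<^sup>2 / (1 + t\<^sup>2)" by simp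
    show "((\<lambda>t::real. K * M\<^sup>2 / (1 + t\<^sup>2)) \<longlongrightarrow> 0) F"
      using that by (elim disjE; simp; real_asymp)
  qed
  have "(LBINT t=-\<infinity>..\<infinity>. E t) = 0 - 0"
  proof (rule interval_integral_FTC_integrable)
    show "\<And>t. (Q has_vector_derivative E t) (at t)"
      using Q_deriv by (simp add: has_real_derivative_iff_has_vector_derivative)
    show "\<And>t. isCont E t" using cE by (simp add: continuous_on_eq_continuous_at)
    show "set_integrable lborel (einterval (- \<infinity>) \<infinity>) E" using intE by (simp add: set_integrable_def)
    show "((Q \<circ> real_of_ereal) \<longlongrightarrow> 0) (at_right (- \<infinity>))" "((Q \<circ> real_of_ereal) \<longlongrightarrow> 0) (at_left \<infinity>)"
      unfolding ereal_tendsto_simps using Q_lim by blast+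
  qed auto
  then show "integral\<^sup>L lborel E = 0"
    by (simp add: interval_lebesgue_integral_def set_lebesgue_integral_def)
  show "integrable lborel E" by (rule intE)
qed

lemma two_abs_inner_le:
  fixes a b c d \<epsilon> :: real
  assumes "\<epsilon> > 0"
  shows "2 * \<bar>a * c + b * d\<bar> \<le> \<epsilon> * (a\<^sup>2 + b\<^sup>2) + (c\<^sup>2 + d\<^sup>2) / \<epsilon>"
proof -
  have "\<epsilon> * (a\<^sup>2 + b\<^sup>2) + (c\<^sup>2 + d\<^sup>2) / \<epsilon> - 2 * (a * c + b * d) = ((\<epsilon> * a - c)\<^sup>2 + (\<epsilon> * b - d)\<^sup>2) / \<epsilon>"
    and "\<epsilon> * (a\<^sup>2 + b\<^sup>2) + (c\<^sup>2 + d\<^sup>2) / \<epsilon> + 2 * (a * c + b * d) = ((\<epsilon> * a + c)\<^sup>2 + (\<epsilon> * b + d)\<^sup>2) / \<epsilon>"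
    using assms by (simp_all add: field_simps power2_eq_square)
  moreover have "((\<epsilon> * a - c)\<^sup>2 + (\<epsilon> * b - d)\<^sup>2) / \<epsilon> \<ge> 0" "((\<epsilon> * a + c)\<^sup>2 + (\<epsilon> * b + d)\<^sup>2) / \<epsilon> \<ge> 0"
    using assms by auto
  ultimately show ?thesis by (simp add: abs_if)
qed

lemma powr_interpolation:
  fixes \<sigma> \<rho> Z :: real
  assumes s: "0 < \<sigma>" and r: "0 < \<rho>" and z: "\<rho>\<^sup>2 \<le> Z"
  shows "\<rho> powr (2*\<sigma>+1) * Z powr (\<sigma> - 1/2) \<le> \<rho> powr (4*\<sigma>) + Z powr (2*\<sigma>)"
proof -
  have r2p: "0 < \<rho>\<^sup>2" using r by simp
  have r2: "\<rho>\<^sup>2 = \<rho> powr 2" using r by (simp add: powr_realpow)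
  have nn: "0 \<le> \<rho> powr (4*\<sigma>)" "0 \<le> Z powr (2*\<sigma>)" by auto
  show ?thesis
  proof (cases "\<sigma> \<le> 1/2")
    case True
    have "Z powr (\<sigma> - 1/2) \<le> (\<rho>\<^sup>2) powr (\<sigma> - 1/2)"
      by (rule powr_mono2') (use True r2p z in auto)
    also have "(\<rho>\<^sup>2) powr (\<sigma> - 1/2) = \<rho> powr (2*\<sigma> - 1)" unfolding r2 powr_powr by (simp add: algebra_simps)
    finally have "\<rho> powr (2*\<sigma>+1) * Z powr (\<sigma> - 1/2) \<le> \<rho> powr (2*\<sigma>+1) * \<rho> powr (2*\<sigma> - 1)"
      by (rule mult_left_mono) simp
    also have "\<dots> = \<rho> powr (4*\<sigma>)" unfolding powr_add[symmetric] by (simp add: algebra_simps)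
    finally show ?thesis using nn by linarith
  next
    case False
    have "\<rho> powr (2*\<sigma>+1) = (\<rho>\<^sup>2) powr (\<sigma> + 1/2)" unfolding r2 powr_powr by (simp add: algebra_simps)
    also have "\<dots> \<le> Z powr (\<sigma> + 1/2)" by (rule powr_mono2) (use s r2p z in auto)
    finally have "\<rho> powr (2*\<sigma>+1) * Z powr (\<sigma> - 1/2) \<le> Z powr (\<sigma> + 1/2) * Z powr (\<sigma> - 1/2)"
      by (rule mult_right_mono) simp
    also have "\<dots> = Z powr (2*\<sigma>)" unfolding powr_add[symmetric] by (simp add: algebra_simps)
    finally show ?thesis using nn by linarith
  qed
qed

lemma jbr_powr: "jbr y powr (2*\<sigma>) = (1 + (norm y)\<^sup>2) powr \<sigma>"
proof -
  have "jbr y = (1 + (norm y)\<^sup>2) powr (1/2)"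
    unfolding jbr_def by (simp add: powr_half_sqrt add_nonneg_nonneg)
  then show ?thesis by (simp add: powr_powr)
qed

lemma bracket_powr_bounds:
  fixes N \<sigma> :: real
  assumes "0 < \<sigma>" "\<sigma> < 1"
  shows "1 \<le> (1 + N\<^sup>2) powr \<sigma>" and "(1 + N\<^sup>2) powr \<sigma> \<le> 1 + N\<^sup>2"
proof -
  have b: "1 \<le> 1 + N\<^sup>2" by simp
  show "1 \<le> (1 + N\<^sup>2) powr \<sigma>" using b assms by (simp add: ge_one_powr_ge_zero)
  have "(1 + N\<^sup>2) powr \<sigma> \<le> (1 + N\<^sup>2) powr 1" by (rule powr_mono) (use b assms in auto)
  then show "(1 + N\<^sup>2) powr \<sigma> \<le> 1 + N\<^sup>2" using b by simp
qed

lemma two_powr_le_two: "0 \<le> s \<Longrightarrow> s \<le> 1 \<Longrightarrow> (2::real) powr s \<le> 2"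
  using powr_mono[of s 1 2] by simp

section \<open>The symbol F\<close>

lemma Ffun_nonneg:
  assumes "0 \<le> w x" "w x \<le> 1"
  shows "0 \<le> Ffun \<sigma> w x"
  using assms unfolding Ffun_def by (intro add_nonneg_nonneg mult_nonneg_nonneg) auto

lemma Ffun_ge_powr:
  assumes "0 < \<sigma>" "\<sigma> < 1" "0 \<le> w x" "w x \<le> 1" and "1 \<le> norm x"
  shows "norm x powr (2*\<sigma>) \<le> Ffun \<sigma> w x"
proof -
  have "norm x powr (2*\<sigma>) \<le> norm x powr 2" by (rule powr_mono) (use assms in auto)
  then have "norm x powr (2*\<sigma>) \<le> (norm x)\<^sup>2" using assms(5) by (simp add: powr_realpow)
  then have "norm x powr (2*\<sigma>) * (1 - w x) \<le> (norm x)\<^sup>2 * (1 - w x)"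
    using assms by (intro mult_right_mono) auto
  then show ?thesis unfolding Ffun_def by (simp add: algebra_simps)
qed

lemma Ffun_ge_bracket:
  assumes s: "0 < \<sigma>" "\<sigma> < 1" and w: "0 \<le> w x" "w x \<le> 1"
  shows "(1 + (norm x)\<^sup>2) powr \<sigma> / 2 - 1 \<le> Ffun \<sigma> w x"
proof (cases "1 \<le> norm x")
  case True
  have "(1 + (norm x)\<^sup>2) powr \<sigma> \<le> (2 * (norm x)\<^sup>2) powr \<sigma>"
    by (rule powr_mono2) (use s True in auto)
  also have "\<dots> = 2 powr \<sigma> * (norm x powr 2) powr \<sigma>"
    using True by (simp add: powr_mult powr_realpow)
  also have "\<dots> = 2 powr \<sigma> * norm x powr (2*\<sigma>)" by (simp only: powr_powr)
  also have "\<dots> \<le> 2 * norm x powr (2*\<sigma>)"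
    using two_powr_le_two[of \<sigma>] s by (intro mult_right_mono) auto
  finally show ?thesis using Ffun_ge_powr[of \<sigma> w x, OF s w True] by linarith
next
  case False
  have "(1 + (norm x)\<^sup>2) powr \<sigma> \<le> 2 powr \<sigma>"
    using False s by (intro powr_mono2) (auto simp: power_le_one)
  then show ?thesis using two_powr_le_two[of \<sigma>] s Ffun_nonneg[of w x \<sigma>, OF w] by linarith
qed

lemma Ffun_le:
  assumes s: "0 < \<sigma>" "\<sigma> < 1" and w: "0 \<le> w x" "w x \<le> 1"
  shows "Ffun \<sigma> w x \<le> 1 + (norm x)\<^sup>2"
proof -
  have "norm x powr (2*\<sigma>) \<le> 1 + (norm x)\<^sup>2"
  proof (cases "1 \<le> norm x")
    case True
    have "norm x powr (2*\<sigma>) \<le> norm x powr 2" by (rule powr_mono) (use s True in auto)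
    then show ?thesis using True by (simp add: powr_realpow)
  next
    case False
    have "norm x powr (2*\<sigma>) \<le> 1 powr (2*\<sigma>)" by (rule powr_mono2) (use False s in auto)
    then have "norm x powr (2*\<sigma>) \<le> 1" by simp
    then show ?thesis using zero_le_power2[of "norm x"] by linarith
  qed
  then have "norm x powr (2*\<sigma>) * w x + (norm x)\<^sup>2 * (1 - w x)
      \<le> (1 + (norm x)\<^sup>2) * w x + (1 + (norm x)\<^sup>2) * (1 - w x)"
    using w by (intro add_mono mult_right_mono) auto
  then show ?thesis unfolding Ffun_def by (simp add: algebra_simps)
qed

lemma norm_diff_scaleR_square:
  fixes x1 x2 :: "'a::real_inner"
  shows "(norm (x2 - t *\<^sub>R x1))\<^sup>2 = x2 \<bullet> x2 - 2 * t * (x1 \<bullet> x2) + t\<^sup>2 * (x1 \<bullet> x1)"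
  unfolding power2_norm_eq_inner
  by (simp add: inner_commute algebra_simps power2_eq_square)

lemma norm_diff_scaleR_ge:
  fixes x1 x2 :: "'a::real_inner"
  assumes "x1 \<noteq> 0"
  shows "(norm x1)\<^sup>2 * (t - (x1 \<bullet> x2) / (x1 \<bullet> x1))\<^sup>2 \<le> (norm (x2 - t *\<^sub>R x1))\<^sup>2"
proof -
  define n m k where "n = x1 \<bullet> x1" and "m = x1 \<bullet> x2" and "k = x2 \<bullet> x2"
  have n0: "n > 0" using assms unfolding n_def by simp
  have cs: "m\<^sup>2 \<le> n * k" unfolding n_def m_def k_def using Cauchy_Schwarz_ineq[of x1 x2] by simp
  have nx: "(norm x1)\<^sup>2 = n" unfolding n_def by (simp add: power2_norm_eq_inner)
  have "(norm (x2 - t *\<^sub>R x1))\<^sup>2 - (norm x1)\<^sup>2 * (t - m / n)\<^sup>2 = k - m\<^sup>2 / n"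
    unfolding norm_diff_scaleR_square nx using n0
    unfolding n_def[symmetric] m_def[symmetric] k_def[symmetric]
    by (simp add: field_simps power2_eq_square)
  moreover have "k - m\<^sup>2 / n \<ge> 0" using cs n0 by (simp add: field_simps)
  ultimately show ?thesis unfolding m_def n_def by linarith
qed

(* Both weights are used through the same pointwise pattern: with
     e = phi' U + 4 pi phi J - 4 pi phi b U   (the energy density, of integral 0)
   and 2 |J| <= eps U + H / eps for all eps > 0, a lower bound on -phi' + 4 pi phi b
   turns into an upper bound on U. *)

lemma pointwise_bound_bounded_weight:
  fixes c R U H J \<phi> \<phi>' b e :: real
  assumes c: "c > 0" and R: "R > 0" and U: "U \<ge> 0"
    and am: "\<And>\<epsilon>. \<epsilon> > 0 \<Longrightarrow> 2 * \<bar>J\<bar> \<le> \<epsilon> * U + H / \<epsilon>"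
    and ph: "0 \<le> \<phi>" "\<phi> \<le> 4"
    and key: "- \<phi>' + 4 * pi * \<phi> * b \<ge> c * R"
    and e: "e = \<phi>' * U + 4 * pi * \<phi> * J - 4 * pi * \<phi> * b * U"
  shows "R\<^sup>2 * U \<le> (256 * pi\<^sup>2 / c\<^sup>2) * H - (2 * R / c) * e"
proof -
  define \<delta> where "\<delta> = c * R / (16 * pi)"
  have \<delta>: "\<delta> > 0" unfolding \<delta>_def using c R by simp
  have "(c * R) * U \<le> (- \<phi>' + 4 * pi * \<phi> * b) * U" using key U by (rule mult_right_mono)
  also have "\<dots> = - e + 4 * pi * \<phi> * J" unfolding e by (simp add: algebra_simps)
  also have "4 * pi * \<phi> * J \<le> 8 * pi * (2 * \<bar>J\<bar>)"
  proof -
    have "4 * pi * \<phi> * J \<le> 4 * pi * \<phi> * \<bar>J\<bar>" using ph by (intro mult_left_mono) auto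
    also have "\<dots> \<le> 4 * pi * 4 * \<bar>J\<bar>" using ph by (intro mult_right_mono mult_left_mono) auto
    finally show ?thesis by simp
  qed
  also have "8 * pi * (2 * \<bar>J\<bar>) \<le> 8 * pi * (\<delta> * U + H / \<delta>)"
    using am[OF \<delta>] by (intro mult_left_mono) auto
  also have "8 * pi * (\<delta> * U + H / \<delta>) = (c * R / 2) * U + 128 * pi\<^sup>2 * H / (c * R)"
    unfolding \<delta>_def using c R by (simp add: field_simps power2_eq_square)
  finally have "(c * R / 2) * U \<le> - e + 128 * pi\<^sup>2 * H / (c * R)" by simp
  then have "(2 * R / c) * ((c * R / 2) * U) \<le> (2 * R / c) * (- e + 128 * pi\<^sup>2 * H / (c * R))"
    using c R by (intro mult_left_mono) auto
  moreover have "(2 * R / c) * ((c * R / 2) * U) = R\<^sup>2 * U"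
    using c R by (simp add: field_simps power2_eq_square)
  moreover have "(2 * R / c) * (- e + 128 * pi\<^sup>2 * H / (c * R)) = (256 * pi\<^sup>2 / c\<^sup>2) * H - (2 * R / c) * e"
    using c R by (simp add: field_simps power2_eq_square)
  ultimately show ?thesis by simp
qed

lemma pointwise_bound_power_weight:
  fixes a0 \<kappa> U H V \<rho>2 \<phi> \<phi>' b J e :: real
  assumes a0: "a0 > 0" and \<kappa>: "\<kappa> > 0" "18 / \<kappa> \<le> pi * a0 / 2" and U: "U \<ge> 0"
    and V: "V \<ge> 1" and \<rho>: "\<rho>2 > 0"
    and d: "\<bar>\<phi>'\<bar> \<le> (18 / \<kappa>) * (\<rho>2\<^sup>2 + V\<^sup>2)"
    and ph: "V \<le> \<phi>" "\<phi> \<le> 2 * (\<rho>2 + V)"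
    and pb: "\<phi> * b \<ge> a0 * (V\<^sup>2 / 2 - V)"
    and e: "e = \<phi>' * U + 4 * pi * \<phi> * J - 4 * pi * \<phi> * b * U"
    and am: "\<And>\<epsilon>. \<epsilon> > 0 \<Longrightarrow> 2 * \<bar>J\<bar> \<le> \<epsilon> * U + H / \<epsilon>"
  shows "(pi * a0 / 2) * V\<^sup>2 * U
    \<le> 8 * pi * a0 * U + (pi * a0 / 2 + 4 * pi) * \<rho>2\<^sup>2 * U + (4 * pi + 32 * pi / a0) * H - e"
proof -
  have s1: "4 * pi * (a0 * (V\<^sup>2 / 2 - V)) * U \<le> 4 * pi * (\<phi> * b) * U"
    using pb U by (intro mult_right_mono mult_left_mono) auto
  have "(18 / \<kappa>) * (\<rho>2\<^sup>2 + V\<^sup>2) \<le> (pi * a0 / 2) * (\<rho>2\<^sup>2 + V\<^sup>2)"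
    using \<kappa>(2) by (intro mult_right_mono) auto
  then have "\<phi>' \<le> (pi * a0 / 2) * (\<rho>2\<^sup>2 + V\<^sup>2)" using d by linarith
  then have s2: "\<phi>' * U \<le> (pi * a0 / 2) * (\<rho>2\<^sup>2 + V\<^sup>2) * U" using U by (rule mult_right_mono)
  (* absorb 4 pi phi J, splitting phi <= 2 rho2 + 2 V and using eps = rho2 and eps = a0 V/8 *)
  have s3: "4 * pi * \<phi> * J \<le> 4 * pi * \<rho>2 * (2 * \<bar>J\<bar>) + 4 * pi * V * (2 * \<bar>J\<bar>)"
  proof -
    have "4 * pi * \<phi> * J \<le> 4 * pi * \<phi> * \<bar>J\<bar>" using ph V by (intro mult_left_mono) auto
    also have "\<dots> \<le> 4 * pi * (2 * (\<rho>2 + V)) * \<bar>J\<bar>" using ph by (intro mult_right_mono mult_left_mono) auto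
    finally show ?thesis by (simp add: algebra_simps)
  qed
  have "4 * pi * \<rho>2 * (2 * \<bar>J\<bar>) \<le> 4 * pi * \<rho>2 * (\<rho>2 * U + H / \<rho>2)"
    using am[OF \<rho>] \<rho> by (intro mult_left_mono) auto
  moreover have "4 * pi * \<rho>2 * (\<rho>2 * U + H / \<rho>2) = 4 * pi * \<rho>2\<^sup>2 * U + 4 * pi * H"
    using \<rho> by (simp add: field_simps power2_eq_square)
  ultimately have s4: "4 * pi * \<rho>2 * (2 * \<bar>J\<bar>) \<le> 4 * pi * \<rho>2\<^sup>2 * U + 4 * pi * H"
    by linarith
  have "4 * pi * V * (2 * \<bar>J\<bar>) \<le> 4 * pi * V * ((a0 / 8 * V) * U + H / (a0 / 8 * V))"
    using am[of "a0 / 8 * V"] a0 V by (intro mult_left_mono) auto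
  moreover have "4 * pi * V * ((a0 / 8 * V) * U + H / (a0 / 8 * V))
      = (pi * a0 / 2) * V\<^sup>2 * U + (32 * pi / a0) * H"
    using V a0 by (simp add: field_simps power2_eq_square)
  ultimately have s5: "4 * pi * V * (2 * \<bar>J\<bar>) \<le> (pi * a0 / 2) * V\<^sup>2 * U + (32 * pi / a0) * H"
    by linarith
  have "4 * V \<le> V\<^sup>2 / 2 + 8" using zero_le_power2[of "V - 4"] by (simp add: power2_eq_square algebra_simps)
  then have "(pi * a0 * U) * (4 * V) \<le> (pi * a0 * U) * (V\<^sup>2 / 2 + 8)" using a0 U by (intro mult_left_mono) auto
  then have s6: "4 * pi * a0 * V * U \<le> (pi * a0 / 2) * V\<^sup>2 * U + 8 * pi * a0 * U" by (simp add: algebra_simps)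
  show ?thesis using s1 s2 s3 s4 s5 s6 unfolding e by (simp add: algebra_simps)
qed

locale estimate_setting =
  fixes \<sigma> a0 A :: real and a :: "real \<Rightarrow> real^'n \<Rightarrow> real^'n \<Rightarrow> real" and w :: "real^'n \<Rightarrow> real"
    and u :: "real \<Rightarrow> complex" and x1 x2 \<xi>1 \<xi>2 :: "real^'n"
  assumes s0: "0 < \<sigma>" and s1: "\<sigma> < 1" and a0: "a0 > 0"
    and a_lower: "\<And>t \<xi> \<eta>. a t \<xi> \<eta> \<ge> a0" and a_upper: "\<And>t \<xi> \<eta>. \<bar>a t \<xi> \<eta>\<bar> \<le> A"
    and a_cont: "continuous_on UNIV (\<lambda>t. a t \<xi>2 (\<xi>1 + t *\<^sub>R \<xi>2))"
    and w_cont: "continuous_on UNIV w" and w_range: "\<And>x. 0 \<le> w x \<and> w x \<le> 1"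
    and u_schwartz: "schwartz u"
begin

definition "D = vderiv u"
definition "P t = Ptilde \<sigma> a w x1 x2 \<xi>1 \<xi>2 u t"
definition "b t = a t \<xi>2 (\<xi>1 + t *\<^sub>R \<xi>2) * Ffun \<sigma> w (x2 - t *\<^sub>R x1)"
definition "U t = (cmod (u t))\<^sup>2"
definition "PU t = (cmod (P t))\<^sup>2"
definition "J t = Re (u t) * Re (P t) + Im (u t) * Im (P t)"
definition "N t = norm (x2 - t *\<^sub>R x1)"
definition "V t = (1 + (N t)\<^sup>2) powr \<sigma>"

lemma P_eq: "P t = D t / (2 * pi) + complex_of_real (b t) * u t"
  unfolding P_def Ptilde_def D_def b_def by (simp add: field_simps)

lemma U_nonneg: "U t \<ge> 0" and PU_nonneg: "PU t \<ge> 0"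
  unfolding U_def PU_def by simp_all

lemma two_abs_J_le: "\<epsilon> > 0 \<Longrightarrow> 2 * \<bar>J t\<bar> \<le> \<epsilon> * U t + PU t / \<epsilon>"
  unfolding J_def U_def PU_def cmod_power2 by (rule two_abs_inner_le)

(* The energy identity rewritten in terms of P u: since u' = 2 pi (P u - b u),
   Re(conj u * u') = 2 pi (J - b U). *)
lemma energy_identity_P:
  fixes \<phi> \<phi>' :: "real \<Rightarrow> real"
  assumes "\<And>t. (\<phi> has_real_derivative \<phi>' t) (at t)" "continuous_on UNIV \<phi>'"
    "\<And>t. \<bar>\<phi> t\<bar> \<le> K * (1 + t\<^sup>2)" "\<And>t. \<bar>\<phi>' t\<bar> \<le> K * (1 + t\<^sup>2)"
  defines "E \<equiv> \<lambda>t. \<phi>' t * U t + 4 * pi * \<phi> t * J t - 4 * pi * \<phi> t * b t * U t"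
  shows "integrable lborel E" and "integral\<^sup>L lborel E = 0"
proof -
  have cross: "Re (u t) * Re (vderiv u t) + Im (u t) * Im (vderiv u t) = 2 * pi * (J t - b t * U t)" for t
  proof -
    have ReD: "Re (D t) = 2 * pi * (Re (P t) - b t * Re (u t))"
      and ImD: "Im (D t) = 2 * pi * (Im (P t) - b t * Im (u t))"
      unfolding P_eq by (simp_all add: field_simps)
    show ?thesis unfolding D_def[symmetric] ReD ImD J_def U_def cmod_power2
      by (simp add: algebra_simps power2_eq_square)
  qed
  have "E t = \<phi>' t * (cmod (u t))\<^sup>2
               + 2 * \<phi> t * (Re (u t) * Re (vderiv u t) + Im (u t) * Im (vderiv u t))" for t
    unfolding E_def cross by (simp add: U_def algebra_simps)
  then have "E = (\<lambda>t. \<phi>' t * (cmod (u t))\<^sup>2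
               + 2 * \<phi> t * (Re (u t) * Re (vderiv u t) + Im (u t) * Im (vderiv u t)))"
    by (rule ext)
  then show "integrable lborel E" "integral\<^sup>L lborel E = 0"
    using energy_identity[OF u_schwartz assms(1-4)] by simp_all
qed

lemma F_line_bounds:
  shows "0 \<le> Ffun \<sigma> w (x2 - t *\<^sub>R x1)"
    and "1 \<le> N t \<Longrightarrow> N t powr (2*\<sigma>) \<le> Ffun \<sigma> w (x2 - t *\<^sub>R x1)"
    and "V t / 2 - 1 \<le> Ffun \<sigma> w (x2 - t *\<^sub>R x1)"
    and "Ffun \<sigma> w (x2 - t *\<^sub>R x1) \<le> 1 + (N t)\<^sup>2"
proof -
  let ?y = "x2 - t *\<^sub>R x1"
  have w: "0 \<le> w ?y" "w ?y \<le> 1" using w_range[of ?y] by auto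
  show "0 \<le> Ffun \<sigma> w ?y" using Ffun_nonneg[of w ?y, OF w] .
  show "1 \<le> N t \<Longrightarrow> N t powr (2*\<sigma>) \<le> Ffun \<sigma> w ?y"
    unfolding N_def using Ffun_ge_powr[of \<sigma> w ?y, OF s0 s1 w] .
  show "V t / 2 - 1 \<le> Ffun \<sigma> w ?y"
    unfolding V_def N_def using Ffun_ge_bracket[of \<sigma> w ?y, OF s0 s1 w] .
  show "Ffun \<sigma> w ?y \<le> 1 + (N t)\<^sup>2"
    unfolding N_def using Ffun_le[of \<sigma> w ?y, OF s0 s1 w] .
qed

lemma A_nonneg: "A \<ge> 0" using a_upper[of 0 0 0] by linarith

lemma b_ge: "b t \<ge> a0 * Ffun \<sigma> w (x2 - t *\<^sub>R x1)"
  unfolding b_def using a_lower F_line_bounds(1) by (intro mult_right_mono) auto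

lemma b_nonneg: "b t \<ge> 0"
  using b_ge[of t] mult_nonneg_nonneg[OF less_imp_le[OF a0] F_line_bounds(1)[of t]] by linarith

lemma b_le: "b t \<le> A * (1 + (N t)\<^sup>2)"
proof -
  have "b t \<le> \<bar>a t \<xi>2 (\<xi>1 + t *\<^sub>R \<xi>2)\<bar> * Ffun \<sigma> w (x2 - t *\<^sub>R x1)"
    unfolding b_def using F_line_bounds(1)[of t] by (intro mult_right_mono) auto
  also have "\<dots> \<le> A * (1 + (N t)\<^sup>2)"
    using a_upper F_line_bounds(1,4)[of t] A_nonneg by (intro mult_mono) auto
  finally show ?thesis .
qed

lemma V_ge_1: "V t \<ge> 1" and V_le: "V t \<le> 1 + (N t)\<^sup>2"
  unfolding V_def using bracket_powr_bounds[OF s0 s1] by auto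

definition "Q = 2 * ((norm x1)\<^sup>2 + (norm x2)\<^sup>2)"

lemma Q_nonneg: "Q \<ge> 0" unfolding Q_def by simp

lemma N_square_le: "(N t)\<^sup>2 \<le> Q * (1 + t\<^sup>2)"
proof -
  have "N t \<le> norm x2 + \<bar>t\<bar> * norm x1" unfolding N_def
    by (metis norm_scaleR norm_triangle_ineq4)
  then have "(N t)\<^sup>2 \<le> (norm x2 + \<bar>t\<bar> * norm x1)\<^sup>2" unfolding N_def by (intro power_mono) auto
  also have "\<dots> \<le> 2 * (norm x2)\<^sup>2 + 2 * t\<^sup>2 * (norm x1)\<^sup>2"
    using zero_le_power2[of "norm x2 - \<bar>t\<bar> * norm x1"] by (simp add: power2_eq_square algebra_simps)
  also have "\<dots> \<le> Q * (1 + t\<^sup>2)" unfolding Q_def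
    by (simp add: algebra_simps add_nonneg_nonneg mult_nonneg_nonneg)
  finally show ?thesis .
qed

lemma cont_u: "continuous_on UNIV u" and cont_D: "continuous_on UNIV D"
  using schwartz_continuous[OF u_schwartz] unfolding D_def by auto

lemma cont_b: "continuous_on UNIV b"
proof -
  have cw: "continuous_on UNIV (\<lambda>t. w (x2 - t *\<^sub>R x1))"
    by (rule continuous_on_compose2[OF w_cont]) (auto intro!: continuous_intros)
  have cp: "continuous_on UNIV (\<lambda>t. norm (x2 - t *\<^sub>R x1) powr (2*\<sigma>))"
    by (rule continuous_on_powr') (auto intro!: continuous_intros simp: s0)
  have "continuous_on UNIV (\<lambda>t. Ffun \<sigma> w (x2 - t *\<^sub>R x1))"
    unfolding Ffun_def by (intro continuous_intros cw cp)
  then show ?thesis unfolding b_def[abs_def] by (intro continuous_intros a_cont)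
qed

lemma cont_P: "continuous_on UNIV P"
  unfolding P_eq[abs_def] by (intro continuous_intros cont_D cont_b cont_u) simp

lemma cont_V: "continuous_on UNIV V"
  unfolding V_def[abs_def] N_def
  by (rule continuous_on_powr') (auto intro!: continuous_intros simp: add_nonneg_nonneg s0)

end

section \<open>First weight: an arctangent centred at the point closest to x2\<close>

context estimate_setting
begin

definition "r = max 1 (norm x1)"
definition "\<alpha> = 2*\<sigma>/(2*\<sigma>+1)"
(* R = max 1 |x1| ^ (2s/(2s+1)) dominates <x1>^(2s/(2s+1)), the first weight of the theorem *)
definition "R = r powr \<alpha>"
definition "c_arc = min (1/4) a0"
definition "C_arc = 256 * pi\<^sup>2 / c_arc\<^sup>2"
(* t0: parameter of the point of the line t x1 closest to x2 *)
definition "t0 = (x1 \<bullet> x2) / (x1 \<bullet> x1)"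
definition "\<phi>1 t = 2 - arctan (R * (t - t0)) / 2"
definition "\<phi>1' t = - (R / (2 * (1 + (R * (t - t0))\<^sup>2)))"

lemma r_ge_1: "r \<ge> 1" unfolding r_def by simp

lemma R_ge_1: "R \<ge> 1" unfolding R_def \<alpha>_def using r_ge_1 s0 by (simp add: ge_one_powr_ge_zero)

lemma c_arc_pos: "c_arc > 0" unfolding c_arc_def using a0 by simp

lemma C_arc_nonneg: "C_arc \<ge> 0" unfolding C_arc_def by simp

lemma arc_weight_deriv: "(\<phi>1 has_real_derivative \<phi>1' t) (at t)"
proof -
  have "1 + (R * (t - t0))\<^sup>2 > 0" by (simp add: add_pos_nonneg)
  then show ?thesis unfolding \<phi>1_def[abs_def] \<phi>1'_def
    by (auto intro!: derivative_eq_intros simp: field_simps)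
qed

lemma arc_weight_deriv_cont: "continuous_on UNIV \<phi>1'"
  unfolding \<phi>1'_def[abs_def] by (intro continuous_intros) (auto simp: add_nonneg_eq_0_iff)

lemma arc_weight_range: "1 \<le> \<phi>1 t" "\<phi>1 t \<le> 3"
  using arctan_bounded[of "R * (t - t0)"] pi_less_4 unfolding \<phi>1_def by auto

lemma minus_arc_weight_deriv: "- \<phi>1' t = R / (2 * (1 + (R * (t - t0))\<^sup>2))"
  unfolding \<phi>1'_def by simp

lemma arc_weight_growth: "\<bar>\<phi>1 t\<bar> \<le> (3 + R) * (1 + t\<^sup>2)" "\<bar>\<phi>1' t\<bar> \<le> (3 + R) * (1 + t\<^sup>2)"
proof -
  have "(3 + R) * 1 \<le> (3 + R) * (1 + t\<^sup>2)" using R_ge_1 by (intro mult_left_mono) auto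
  then have "3 + R \<le> (3 + R) * (1 + t\<^sup>2)" by simp
  then have grow: "X \<le> (3 + R) * (1 + t\<^sup>2)" if "X \<le> 3 + R" for X using that by linarith
  show "\<bar>\<phi>1 t\<bar> \<le> (3 + R) * (1 + t\<^sup>2)" using arc_weight_range[of t] R_ge_1 by (intro grow) simp
  have "R / (2 * (1 + (R * (t - t0))\<^sup>2)) \<le> R"
    using R_ge_1 by (simp add: divide_le_eq add_pos_nonneg)
  moreover have "0 \<le> R / (2 * (1 + (R * (t - t0))\<^sup>2))" using R_ge_1 by simp
  ultimately have "\<bar>\<phi>1' t\<bar> \<le> R" using minus_arc_weight_deriv[of t] by linarith
  then show "\<bar>\<phi>1' t\<bar> \<le> (3 + R) * (1 + t\<^sup>2)" by (intro grow) simp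
qed

(* Away from t0 the potential is large: if R |t - t0| > 1 then
   |x2 - t x1| >= |x1| |t - t0| > r / R = r^(1/(2s+1)) >= 1, hence F >= r^(2s/(2s+1)) = R. *)
lemma F_ge_R_away_from_center:
  assumes x1: "1 < norm x1" and far: "1 < R * \<bar>t - t0\<bar>"
  shows "R \<le> Ffun \<sigma> w (x2 - t *\<^sub>R x1)"
proof -
  have R0: "R > 0" using R_ge_1 by simp
  have r: "r = norm x1" using x1 unfolding r_def by simp
  have "x1 \<noteq> 0" using x1 by auto
  then have dist: "(norm x1)\<^sup>2 * (t - t0)\<^sup>2 \<le> (N t)\<^sup>2"
    unfolding N_def t0_def by (rule norm_diff_scaleR_ge)
  have close: "norm x1 * \<bar>t - t0\<bar> \<le> N t"
    by (rule power2_le_imp_le) (use dist in \<open>auto simp: power_mult_distrib N_def\<close>)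
  have "r / R = r powr (1 / (2*\<sigma>+1))"
  proof -
    have "1 / (2*\<sigma>+1) = 1 - \<alpha>" unfolding \<alpha>_def using s0 by (simp add: field_simps)
    then show ?thesis using r_ge_1 unfolding R_def by (simp add: powr_diff)
  qed
  moreover have "r / R \<le> norm x1 * \<bar>t - t0\<bar>"
  proof -
    have "1 / R < \<bar>t - t0\<bar>" using far R0 by (simp add: pos_divide_less_eq mult.commute)
    then have "norm x1 * (1 / R) \<le> norm x1 * \<bar>t - t0\<bar>" by (intro mult_left_mono) auto
    then show ?thesis unfolding r by simp
  qed
  ultimately have root_le: "r powr (1 / (2*\<sigma>+1)) \<le> N t" using close by linarith
  have root_ge: "1 \<le> r powr (1 / (2*\<sigma>+1))" using r_ge_1 s0 by (simp add: ge_one_powr_ge_zero)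
  have "R = (r powr (1 / (2*\<sigma>+1))) powr (2*\<sigma>)" unfolding R_def \<alpha>_def by (simp add: powr_powr)
  also have "\<dots> \<le> N t powr (2*\<sigma>)" by (rule powr_mono2) (use s0 root_le root_ge in auto)
  also have "\<dots> \<le> Ffun \<sigma> w (x2 - t *\<^sub>R x1)" using F_line_bounds(2) root_le root_ge by simp
  finally show ?thesis .
qed

(* The key positivity of the arctangent weight: near t0 its derivative is of size R,
   away from t0 the potential is of size R. *)
lemma arc_weight_positivity:
  assumes x1: "1 < norm x1"
  shows "c_arc * R \<le> - \<phi>1' t + 4 * pi * \<phi>1 t * b t"
proof -
  have R0: "R > 0" using R_ge_1 by simp
  have pot_nonneg: "0 \<le> 4 * pi * \<phi>1 t * b t" using arc_weight_range[of t] b_nonneg[of t] by simp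
  have der_nonneg: "0 \<le> - \<phi>1' t" unfolding minus_arc_weight_deriv using R0 by (simp add: add_pos_nonneg)
  show ?thesis
  proof (cases "R * \<bar>t - t0\<bar> \<le> 1")
    case True
    then have "(R * (t - t0))\<^sup>2 \<le> 1" using R0 by (simp add: abs_square_le_1 abs_mult)
    then have "R / 4 \<le> - \<phi>1' t"
      unfolding minus_arc_weight_deriv using R0 by (intro divide_left_mono) (auto simp: add_pos_nonneg)
    moreover have "c_arc * R \<le> R / 4" unfolding c_arc_def using R0 by simp
    ultimately show ?thesis using pot_nonneg by linarith
  next
    case False
    have "a0 * R \<le> a0 * Ffun \<sigma> w (x2 - t *\<^sub>R x1)"
      using F_ge_R_away_from_center[OF x1] False a0 by (intro mult_left_mono) auto
    then have "a0 * R \<le> b t" using b_ge[of t] by linarith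
    moreover have "1 \<le> 4 * pi * \<phi>1 t"
      using arc_weight_range[of t] pi_ge_two mult_mono[of 1 pi 1 "\<phi>1 t"] by simp
    ultimately have "a0 * R \<le> 4 * pi * \<phi>1 t * b t"
      using mult_mono[of 1 "4 * pi * \<phi>1 t" "a0 * R" "b t"] a0 R0 by simp
    moreover have "c_arc * R \<le> a0 * R" unfolding c_arc_def using R0 by simp
    ultimately show ?thesis using der_nonneg by linarith
  qed
qed

lemma R_bound:
  "\<exists>E c. integrable lborel E \<and> integral\<^sup>L lborel E = 0 \<and>
     (\<forall>t. R\<^sup>2 * U t \<le> C_arc * PU t + U t - c * E t)"
proof (cases "norm x1 \<le> 1")
  case True
  then have "R = 1" unfolding R_def r_def by simp
  then show ?thesis
    using C_arc_nonneg PU_nonneg by (intro exI[of _ "\<lambda>t. 0"] exI[of _ 0]) auto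
next
  case False
  define E where "E = (\<lambda>t. \<phi>1' t * U t + 4 * pi * \<phi>1 t * J t - 4 * pi * \<phi>1 t * b t * U t)"
  have x1: "1 < norm x1" using False by simp
  have E_eq: "E t = \<phi>1' t * U t + 4 * pi * \<phi>1 t * J t - 4 * pi * \<phi>1 t * b t * U t" for t
    unfolding E_def by simp
  have bound: "R\<^sup>2 * U t \<le> C_arc * PU t - (2 * R / c_arc) * E t" for t
    unfolding C_arc_def
  proof (rule pointwise_bound_bounded_weight[OF c_arc_pos _ U_nonneg two_abs_J_le _ _ _ E_eq])
    show "R > 0" using R_ge_1 by simp
    show "0 \<le> \<phi>1 t" "\<phi>1 t \<le> 4" using arc_weight_range[of t] by linarith+
    show "c_arc * R \<le> - \<phi>1' t + 4 * pi * \<phi>1 t * b t" by (rule arc_weight_positivity[OF x1])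
  qed
  have "R\<^sup>2 * U t \<le> C_arc * PU t + U t - (2 * R / c_arc) * E t" for t
    using bound[of t] U_nonneg[of t] by linarith
  moreover have "integrable lborel E" "integral\<^sup>L lborel E = 0"
    unfolding E_def
    by (rule energy_identity_P[OF arc_weight_deriv arc_weight_deriv_cont arc_weight_growth])+
  ultimately show ?thesis by blast
qed

end

section \<open>Second weight: a power of the distance to the line\<close>

context estimate_setting
begin

(* K is chosen large (K >= 36 / (pi a0)) so that the derivative of the second weight is
   absorbed by the potential term; rho = K r^(1/(2s+1)) and rho2 = rho^(2s) = K^(2s) R. *)
definition "K = max 1 (36 / (pi * a0))"
definition "\<kappa> = K powr (2*\<sigma>+1)"
definition "Kp = K powr (2*\<sigma>)"
definition "\<rho> = K * r powr (1/(2*\<sigma>+1))"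
definition "\<rho>2 = \<rho> powr (2*\<sigma>)"
definition "\<beta> = (2/(pi*a0)) * (pi*a0/2 + 4*pi) * Kp\<^sup>2"
definition "\<gamma> = (2/(pi*a0)) * (4*pi + 32*pi/a0)"

lemma K_ge_1: "K \<ge> 1" unfolding K_def by simp

lemma root_ge_1: "r powr (1/(2*\<sigma>+1)) \<ge> 1" using r_ge_1 s0 by (simp add: ge_one_powr_ge_zero)

lemma rho_ge_1: "\<rho> \<ge> 1" unfolding \<rho>_def using K_ge_1 root_ge_1 by (metis mult_mono' mult_1 zero_le_one)

lemma rho2_eq: "\<rho>2 = Kp * R"
proof -
  have "\<rho>2 = K powr (2*\<sigma>) * (r powr (1/(2*\<sigma>+1))) powr (2*\<sigma>)"
    unfolding \<rho>2_def \<rho>_def using K_ge_1 r_ge_1 by (simp add: powr_mult)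
  also have "(r powr (1/(2*\<sigma>+1))) powr (2*\<sigma>) = R" unfolding R_def \<alpha>_def by (simp add: powr_powr)
  finally show ?thesis unfolding Kp_def .
qed

lemma rho_powr_4s: "\<rho> powr (4*\<sigma>) = \<rho>2\<^sup>2"
  unfolding \<rho>2_def power2_eq_square powr_add[symmetric] by simp

lemma rho_powr_2s1: "\<rho> powr (2*\<sigma>+1) = \<kappa> * r"
proof -
  have "\<rho> powr (2*\<sigma>+1) = K powr (2*\<sigma>+1) * (r powr (1/(2*\<sigma>+1))) powr (2*\<sigma>+1)"
    unfolding \<rho>_def using K_ge_1 r_ge_1 by (simp add: powr_mult)
  also have "(r powr (1/(2*\<sigma>+1))) powr (2*\<sigma>+1) = r" using r_ge_1 s0 by (simp add: powr_powr)
  finally show ?thesis unfolding \<kappa>_def .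
qed

(* kappa = K^(2s+1) >= K >= 36 / (pi a0) *)
lemma kappa_props: "\<kappa> > 0" "18 / \<kappa> \<le> pi * a0 / 2"
proof -
  have "K powr 1 \<le> K powr (2*\<sigma>+1)" by (rule powr_mono) (use K_ge_1 s0 in auto)
  then have kk: "K \<le> \<kappa>" unfolding \<kappa>_def using K_ge_1 by simp
  show kp: "\<kappa> > 0" using kk K_ge_1 by linarith
  have "36 / (pi * a0) \<le> \<kappa>" using kk unfolding K_def by linarith
  then have "18 / \<kappa> \<le> 18 / (36 / (pi * a0))" using a0 kp by (intro divide_left_mono) auto
  then show "18 / \<kappa> \<le> pi * a0 / 2" by simp
qed

lemma rho2_pos: "\<rho>2 > 0" unfolding \<rho>2_def using rho_ge_1 by simp

(* Z t = rho^2 + |x2 - t x1|^2, written as a polynomial in t; the weight is phi2 = Z^s *)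
definition "Z t = \<rho>\<^sup>2 + (x2 \<bullet> x2 - 2 * t * (x1 \<bullet> x2) + t\<^sup>2 * (x1 \<bullet> x1))"
definition "\<phi>2 t = Z t powr \<sigma>"
definition "\<phi>2' t = \<sigma> * Z t powr (\<sigma> - 1) * (2 * t * (x1 \<bullet> x1) - 2 * (x1 \<bullet> x2))"

lemma Z_eq: "Z t = \<rho>\<^sup>2 + (N t)\<^sup>2" unfolding Z_def N_def norm_diff_scaleR_square ..

lemma Z_ge: "Z t \<ge> 1 + (N t)\<^sup>2" "Z t \<ge> \<rho>\<^sup>2" "Z t \<ge> 1"
proof -
  have "\<rho>\<^sup>2 \<ge> 1" using rho_ge_1 by simp
  moreover have "0 \<le> (N t)\<^sup>2" by simp
  ultimately show "Z t \<ge> 1 + (N t)\<^sup>2" "Z t \<ge> \<rho>\<^sup>2" "Z t \<ge> 1" unfolding Z_eq by linarith+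
qed

lemma Z_pos: "Z t > 0" using Z_ge(3)[of t] by linarith

lemma power_weight_ge: "\<phi>2 t \<ge> V t"
  unfolding \<phi>2_def V_def by (rule powr_mono2) (use s0 Z_ge in \<open>auto simp: add_nonneg_nonneg\<close>)

lemma power_weight_le: "\<phi>2 t \<le> 2 * (\<rho>2 + V t)"
proof -
  define m where "m = max (\<rho>\<^sup>2) (1 + (N t)\<^sup>2)"
  have m1: "m \<ge> 1" unfolding m_def using zero_le_power2[of "N t"] by (simp add: le_max_iff_disj)
  have "\<rho>\<^sup>2 \<le> m" "1 + (N t)\<^sup>2 \<le> m" unfolding m_def by simp_all
  then have "Z t \<le> 2 * m" unfolding Z_eq by linarith
  then have "\<phi>2 t \<le> (2 * m) powr \<sigma>" unfolding \<phi>2_def by (intro powr_mono2) (use s0 Z_pos in \<open>auto simp: less_imp_le\<close>)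
  also have "\<dots> = 2 powr \<sigma> * m powr \<sigma>" using m1 by (simp add: powr_mult)
  also have "\<dots> \<le> 2 * m powr \<sigma>"
    using two_powr_le_two[of \<sigma>] s0 s1 by (intro mult_right_mono) auto
  also have "m powr \<sigma> \<le> \<rho>2 + V t"
  proof -
    have r2: "\<rho>\<^sup>2 = \<rho> powr 2" using rho_ge_1 by (simp add: powr_realpow)
    have a: "(\<rho>\<^sup>2) powr \<sigma> = \<rho>2" unfolding \<rho>2_def r2 by (simp add: powr_powr mult.commute)
    have "m powr \<sigma> = (\<rho>\<^sup>2) powr \<sigma> \<or> m powr \<sigma> = V t" unfolding m_def V_def by (simp add: max_def)
    moreover have "0 \<le> (\<rho>\<^sup>2) powr \<sigma>" "0 \<le> V t" using V_ge_1[of t] by auto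
    ultimately show ?thesis using a by linarith
  qed
  then have "2 * m powr \<sigma> \<le> 2 * (\<rho>2 + V t)" by simp
  finally show ?thesis .
qed

lemma power_weight_nonneg: "\<phi>2 t \<ge> 0" unfolding \<phi>2_def by simp

lemma power_weight_deriv_le: "\<bar>\<phi>2' t\<bar> \<le> 2 * norm x1 * Z t powr (\<sigma> - 1/2)"
proof -
  have qd: "2 * t * (x1 \<bullet> x1) - 2 * (x1 \<bullet> x2) = - 2 * (x1 \<bullet> (x2 - t *\<^sub>R x1))"
    by (simp add: inner_diff_right algebra_simps)
  have cs: "\<bar>x1 \<bullet> (x2 - t *\<^sub>R x1)\<bar> \<le> norm x1 * N t" unfolding N_def by (rule Cauchy_Schwarz_ineq2)
  have NZ: "N t \<le> Z t powr (1/2)"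
  proof -
    have "N t = ((N t)\<^sup>2) powr (1/2)" unfolding N_def by (simp add: powr_half_sqrt)
    also have "\<dots> \<le> Z t powr (1/2)" by (rule powr_mono2) (use Z_ge[of t] in auto)
    finally show ?thesis .
  qed
  have "\<bar>\<phi>2' t\<bar> = \<sigma> * Z t powr (\<sigma> - 1) * (2 * \<bar>x1 \<bullet> (x2 - t *\<^sub>R x1)\<bar>)"
    unfolding \<phi>2'_def qd using s0 by (simp add: abs_mult)
  also have "\<dots> \<le> 1 * Z t powr (\<sigma> - 1) * (2 * (norm x1 * Z t powr (1/2)))"
  proof -
    have i1: "\<sigma> * Z t powr (\<sigma> - 1) \<le> 1 * Z t powr (\<sigma> - 1)"
      by (rule mult_right_mono) (use s1 in auto)
    have "norm x1 * N t \<le> norm x1 * Z t powr (1/2)" using NZ by (rule mult_left_mono) simp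
    then have i2: "2 * \<bar>x1 \<bullet> (x2 - t *\<^sub>R x1)\<bar> \<le> 2 * (norm x1 * Z t powr (1/2))" using cs by linarith
    show ?thesis by (rule mult_mono[OF i1 i2]) auto
  qed
  also have "\<dots> = 2 * norm x1 * (Z t powr (\<sigma> - 1) * Z t powr (1/2))" by simp
  also have "Z t powr (\<sigma> - 1) * Z t powr (1/2) = Z t powr (\<sigma> - 1/2)"
    unfolding powr_add[symmetric] by simp
  finally show ?thesis .
qed

(* The choice of rho makes |x1| <= rho^(2s+1) / kappa, and interpolation turns
   |x1| Z^(s-1/2) into rho^(4s) + Z^(2s); both are bounded by rho2^2 + V^2. *)

lemma power_weight_deriv_bound: "\<bar>\<phi>2' t\<bar> \<le> (18 / \<kappa>) * (\<rho>2\<^sup>2 + (V t)\<^sup>2)"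
proof -
  have rk: "norm x1 \<le> \<rho> powr (2*\<sigma>+1) / \<kappa>" unfolding rho_powr_2s1 using kappa_props(1) r_def by simp
  have zz: "0 \<le> Z t powr (\<sigma> - 1/2)" by simp
  have "\<bar>\<phi>2' t\<bar> \<le> 2 * (\<rho> powr (2*\<sigma>+1) / \<kappa>) * Z t powr (\<sigma> - 1/2)"
  proof -
    have "2 * norm x1 \<le> 2 * (\<rho> powr (2*\<sigma>+1) / \<kappa>)" using rk by simp
    from mult_right_mono[OF this zz] power_weight_deriv_le[of t] show ?thesis by linarith
  qed
  also have "\<dots> = (2 / \<kappa>) * (\<rho> powr (2*\<sigma>+1) * Z t powr (\<sigma> - 1/2))" by simp
  also have "\<dots> \<le> (2 / \<kappa>) * (\<rho> powr (4*\<sigma>) + Z t powr (2*\<sigma>))"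
    using powr_interpolation[OF s0 _ Z_ge(2)[of t]] rho_ge_1 kappa_props(1) by (intro mult_left_mono) auto
  finally have A: "\<bar>\<phi>2' t\<bar> \<le> (2 / \<kappa>) * (\<rho>2\<^sup>2 + Z t powr (2*\<sigma>))" unfolding rho_powr_4s .
  have "Z t powr (2*\<sigma>) = (\<phi>2 t)\<^sup>2" unfolding \<phi>2_def power2_eq_square powr_add[symmetric] by simp
  also have "(\<phi>2 t)\<^sup>2 \<le> (2 * (\<rho>2 + V t))\<^sup>2" using power_weight_le power_weight_nonneg by (intro power_mono)
  also have "\<dots> \<le> 8 * \<rho>2\<^sup>2 + 8 * (V t)\<^sup>2"
    using zero_le_power2[of "\<rho>2 - V t"] by (simp add: power2_eq_square algebra_simps)
  finally have B0: "Z t powr (2*\<sigma>) \<le> 8 * \<rho>2\<^sup>2 + 8 * (V t)\<^sup>2" .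
  have B: "\<rho>2\<^sup>2 + Z t powr (2*\<sigma>) \<le> 9 * (\<rho>2\<^sup>2 + (V t)\<^sup>2)"
    unfolding distrib_left using B0 zero_le_power2[of "V t"] by linarith
  have "(2 / \<kappa>) * (\<rho>2\<^sup>2 + Z t powr (2*\<sigma>)) \<le> (2 / \<kappa>) * (9 * (\<rho>2\<^sup>2 + (V t)\<^sup>2))"
    using B kappa_props(1) by (intro mult_left_mono) auto
  also have "\<dots> = (18 / \<kappa>) * (\<rho>2\<^sup>2 + (V t)\<^sup>2)" by simp
  finally show ?thesis using A by linarith
qed

(* Lower bound of the potential term, from phi2 >= V and F >= V/2 - 1 *)
lemma power_weight_potential: "\<phi>2 t * b t \<ge> a0 * ((V t)\<^sup>2 / 2 - V t)"
proof -
  let ?F = "Ffun \<sigma> w (x2 - t *\<^sub>R x1)"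
  have F0: "?F \<ge> 0" using F_line_bounds(1) .
  have "\<phi>2 t * b t \<ge> \<phi>2 t * (a0 * ?F)" using b_ge power_weight_nonneg by (intro mult_left_mono)
  moreover have "\<phi>2 t * (a0 * ?F) \<ge> V t * (a0 * ?F)" using power_weight_ge F0 a0 by (intro mult_right_mono) auto
  moreover have "V t * (a0 * ?F) \<ge> V t * (a0 * (V t / 2 - 1))"
    using F_line_bounds(3)[of t] V_ge_1[of t] a0 by (intro mult_left_mono) auto
  moreover have "V t * (a0 * (V t / 2 - 1)) = a0 * ((V t)\<^sup>2 / 2 - V t)" by (simp add: power2_eq_square algebra_simps)
  ultimately show ?thesis by linarith
qed

lemma power_weight_deriv: "(\<phi>2 has_real_derivative \<phi>2' t) (at t)"
proof -
  have "(Z has_real_derivative (2 * t * (x1 \<bullet> x1) - 2 * (x1 \<bullet> x2))) (at t)"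
    unfolding Z_def[abs_def] by (auto intro!: derivative_eq_intros simp: algebra_simps)
  from DERIV_fun_powr[OF this Z_pos, of \<sigma>] show ?thesis
    unfolding \<phi>2_def[abs_def] \<phi>2'_def by simp
qed

lemma power_weight_deriv_cont: "continuous_on UNIV \<phi>2'"
proof -
  have cZ: "continuous_on UNIV Z" unfolding Z_def[abs_def] by (intro continuous_intros)
  have Z_ne: "\<forall>t\<in>UNIV. Z t \<noteq> 0" using Z_pos by (metis less_irrefl)
  have "continuous_on UNIV (\<lambda>t. Z t powr (\<sigma> - 1))"
  proof (rule continuous_on_powr')
    show "\<forall>t\<in>UNIV. 0 \<le> Z t \<and> (Z t = 0 \<longrightarrow> 0 < \<sigma> - 1)"
      using Z_pos by (metis less_imp_le less_irrefl)
  qed (use cZ in \<open>auto intro!: continuous_intros\<close>)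
  then show ?thesis unfolding \<phi>2'_def[abs_def] by (intro continuous_intros cZ Z_ne)
qed

lemma power_weight_growth:
  defines "Kb \<equiv> (\<rho>\<^sup>2 + Q) * (1 + 2 * norm x1)"
  shows "\<bar>\<phi>2 t\<bar> \<le> Kb * (1 + t\<^sup>2)" and "\<bar>\<phi>2' t\<bar> \<le> Kb * (1 + t\<^sup>2)"
proof -
  have q: "0 \<le> \<rho>\<^sup>2 + Q" using Q_nonneg by (simp add: add_nonneg_nonneg)
  have "Z t \<le> \<rho>\<^sup>2 + Q * (1 + t\<^sup>2)" unfolding Z_eq using N_square_le[of t] by linarith
  also have "\<dots> \<le> (\<rho>\<^sup>2 + Q) * (1 + t\<^sup>2)"
    using mult_left_mono[of 1 "1 + t\<^sup>2" "\<rho>\<^sup>2"] by (simp add: algebra_simps)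
  finally have Zb: "Z t \<le> (\<rho>\<^sup>2 + Q) * (1 + t\<^sup>2)" .
  have Z_powr_le: "Z t powr e \<le> Z t" if "e \<le> 1" for e
    using powr_mono[OF that Z_ge(3)[of t]] Z_pos[of t] by simp
  have "(\<rho>\<^sup>2 + Q) * 1 \<le> Kb" unfolding Kb_def using q by (intro mult_left_mono) auto
  then have Kb: "(\<rho>\<^sup>2 + Q) * (1 + t\<^sup>2) \<le> Kb * (1 + t\<^sup>2)" by (intro mult_right_mono) auto
  show "\<bar>\<phi>2 t\<bar> \<le> Kb * (1 + t\<^sup>2)"
    using power_weight_nonneg[of t] Z_powr_le[of \<sigma>] s1 Zb Kb unfolding \<phi>2_def by simp
  have "\<bar>\<phi>2' t\<bar> \<le> 2 * norm x1 * Z t powr (\<sigma> - 1/2)" by (rule power_weight_deriv_le)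
  also have "\<dots> \<le> 2 * norm x1 * ((\<rho>\<^sup>2 + Q) * (1 + t\<^sup>2))"
    using Z_powr_le[of "\<sigma> - 1/2"] Zb s1 by (intro mult_left_mono) auto
  also have "\<dots> \<le> Kb * (1 + t\<^sup>2)"
    unfolding Kb_def using mult_nonneg_nonneg[OF q, of "1 + t\<^sup>2"] by (simp add: algebra_simps)
  finally show "\<bar>\<phi>2' t\<bar> \<le> Kb * (1 + t\<^sup>2)" .
qed

lemma V_bound:
  "\<exists>E. integrable lborel E \<and> integral\<^sup>L lborel E = 0 \<and>
     (\<forall>t. (V t)\<^sup>2 * U t \<le> 16 * U t + \<beta> * R\<^sup>2 * U t + \<gamma> * PU t - (2 / (pi * a0)) * E t)"
proof -
  define E where "E = (\<lambda>t. \<phi>2' t * U t + 4 * pi * \<phi>2 t * J t - 4 * pi * \<phi>2 t * b t * U t)"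
  have E_eq: "E t = \<phi>2' t * U t + 4 * pi * \<phi>2 t * J t - 4 * pi * \<phi>2 t * b t * U t" for t
    unfolding E_def by simp
  have pa: "pi * a0 > 0" using a0 by simp
  have "(V t)\<^sup>2 * U t \<le> 16 * U t + \<beta> * R\<^sup>2 * U t + \<gamma> * PU t - (2 / (pi * a0)) * E t" for t
  proof -
    have "(pi * a0 / 2) * (V t)\<^sup>2 * U t
        \<le> 8 * pi * a0 * U t + (pi * a0 / 2 + 4 * pi) * \<rho>2\<^sup>2 * U t + (4 * pi + 32 * pi / a0) * PU t - E t"
      by (rule pointwise_bound_power_weight[OF a0 kappa_props U_nonneg V_ge_1 rho2_pos
            power_weight_deriv_bound power_weight_ge power_weight_le power_weight_potential E_eq
            two_abs_J_le])
    from mult_left_mono[OF this, of "2 / (pi * a0)"] pa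
    have "(2 / (pi * a0)) * ((pi * a0 / 2) * (V t)\<^sup>2 * U t) \<le> (2 / (pi * a0)) *
        (8 * pi * a0 * U t + (pi * a0 / 2 + 4 * pi) * \<rho>2\<^sup>2 * U t + (4 * pi + 32 * pi / a0) * PU t - E t)"
      by simp
    moreover have "(2 / (pi * a0)) * ((pi * a0 / 2) * (V t)\<^sup>2 * U t) = (V t)\<^sup>2 * U t" using a0 by simp
    moreover have "(2 / (pi * a0)) *
        (8 * pi * a0 * U t + (pi * a0 / 2 + 4 * pi) * \<rho>2\<^sup>2 * U t + (4 * pi + 32 * pi / a0) * PU t - E t)
      = 16 * U t + \<beta> * R\<^sup>2 * U t + \<gamma> * PU t - (2 / (pi * a0)) * E t"
      unfolding \<beta>_def \<gamma>_def rho2_eq using pa a0 by (simp add: field_simps power2_eq_square)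
    ultimately show ?thesis by linarith
  qed
  moreover have "integrable lborel E" "integral\<^sup>L lborel E = 0"
    unfolding E_def
    by (rule energy_identity_P[OF power_weight_deriv power_weight_deriv_cont power_weight_growth])+
  ultimately show ?thesis by blast
qed

end

(* The constant of the theorem (its square); it depends only on s and a0, through the
   constants C_arc, beta, gamma of the two weighted bounds. *)
definition estimate_constant :: "real \<Rightarrow> real \<Rightarrow> real" where
  "estimate_constant \<sigma> a0 = (let K = max 1 (36 / (pi * a0)); Kp = K powr (2*\<sigma>); c = min (1/4) a0;
      C_arc = 256 * pi\<^sup>2 / c\<^sup>2; \<beta> = (2/(pi*a0)) * (pi*a0/2 + 4*pi) * Kp\<^sup>2;
      \<gamma> = (2/(pi*a0)) * (4*pi + 32*pi/a0); \<Gamma> = 12 + 3 * \<beta> in 51 + \<Gamma> + 3 * \<gamma> + \<Gamma> * C_arc)"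

lemma estimate_constant_pos: "a0 > 0 \<Longrightarrow> estimate_constant \<sigma> a0 > 0"
  unfolding estimate_constant_def Let_def
  by (intro add_pos_nonneg mult_nonneg_nonneg) (auto intro!: add_nonneg_nonneg mult_nonneg_nonneg)

context estimate_setting
begin

definition "W t = 1 + jbr x1 powr (2*\<sigma>/(2*\<sigma>+1)) + jbr (x2 - t *\<^sub>R x1) powr (2*\<sigma>)"
definition "\<Gamma> = 12 + 3 * \<beta>"

lemma gamma_nonneg: "\<gamma> \<ge> 0" and Gamma_nonneg: "\<Gamma> \<ge> 0"
  unfolding \<Gamma>_def \<beta>_def \<gamma>_def using a0 by (auto intro!: mult_nonneg_nonneg add_nonneg_nonneg)

lemma estimate_constant_eq: "estimate_constant \<sigma> a0 = 51 + \<Gamma> + 3 * \<gamma> + \<Gamma> * C_arc"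
  unfolding estimate_constant_def Let_def \<Gamma>_def \<beta>_def \<gamma>_def C_arc_def c_arc_def Kp_def K_def ..

lemma W_eq: "W t = 1 + jbr x1 powr \<alpha> + V t"
  unfolding W_def \<alpha>_def V_def N_def jbr_powr ..

(* <x1>^(2s/(2s+1)) <= 2 R, since <x1> <= 2 r *)
lemma jbr_powr_le_R: "jbr x1 powr \<alpha> \<le> 2 * R"
proof -
  have \<alpha>: "0 \<le> \<alpha>" "\<alpha> \<le> 1" unfolding \<alpha>_def using s0 by auto
  have "(norm x1)\<^sup>2 \<le> r\<^sup>2" unfolding r_def by (intro power_mono) auto
  moreover have "1 \<le> r\<^sup>2" using r_ge_1 by simp
  ultimately have "1 + (norm x1)\<^sup>2 \<le> (2 * r)\<^sup>2" by (simp add: power_mult_distrib)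
  then have "jbr x1 \<le> sqrt ((2 * r)\<^sup>2)" unfolding jbr_def by (rule real_sqrt_le_mono)
  also have "\<dots> = 2 * r" using r_ge_1 by (simp only: real_sqrt_abs)
  finally have "jbr x1 \<le> 2 * r" .
  then have "jbr x1 powr \<alpha> \<le> (2 * r) powr \<alpha>" using \<alpha> by (intro powr_mono2) (auto simp: jbr_def)
  also have "\<dots> = 2 powr \<alpha> * R" unfolding R_def using r_ge_1 by (simp add: powr_mult)
  also have "\<dots> \<le> 2 * R" using two_powr_le_two[OF \<alpha>] R_ge_1 by (intro mult_right_mono) auto
  finally show ?thesis .
qed

lemma W_nonneg: "0 \<le> W t"
  unfolding W_eq using V_ge_1[of t] by (simp add: add_nonneg_nonneg)

lemma W_square_le: "(W t)\<^sup>2 \<le> 3 + 12 * R\<^sup>2 + 3 * (V t)\<^sup>2"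
proof -
  have "(W t)\<^sup>2 \<le> (1 + 2 * R + V t)\<^sup>2"
    using W_nonneg jbr_powr_le_R unfolding W_eq by (intro power_mono) auto
  also have "\<dots> \<le> 3 + 12 * R\<^sup>2 + 3 * (V t)\<^sup>2"
    using zero_le_power2[of "1 - 2 * R"] zero_le_power2[of "1 - V t"] zero_le_power2[of "2 * R - V t"]
    by (simp add: power2_eq_square algebra_simps)
  finally show ?thesis .
qed

lemma weighted_pointwise_bound:
  "\<exists>E. integrable lborel E \<and> integral\<^sup>L lborel E = 0 \<and>
     (\<forall>t. (W t)\<^sup>2 * U t \<le> estimate_constant \<sigma> a0 * (PU t + U t) - E t)"
proof -
  obtain E1 c1 where E1: "integrable lborel E1" "integral\<^sup>L lborel E1 = 0"
    and bound1: "\<And>t. R\<^sup>2 * U t \<le> C_arc * PU t + U t - c1 * E1 t" using R_bound by blast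
  obtain E2 where E2: "integrable lborel E2" "integral\<^sup>L lborel E2 = 0"
    and bound2: "\<And>t. (V t)\<^sup>2 * U t \<le> 16 * U t + \<beta> * R\<^sup>2 * U t + \<gamma> * PU t - (2 / (pi * a0)) * E2 t"
    using V_bound by blast
  define E where "E = (\<lambda>t. (\<Gamma> * c1) * E1 t + (3 * (2 / (pi * a0))) * E2 t)"
  have "(W t)\<^sup>2 * U t \<le> estimate_constant \<sigma> a0 * (PU t + U t) - E t" for t
  proof -
    have "(W t)\<^sup>2 * U t \<le> (3 + 12 * R\<^sup>2 + 3 * (V t)\<^sup>2) * U t"
      using W_square_le U_nonneg by (rule mult_right_mono)
    also have "\<dots> = 3 * U t + 12 * (R\<^sup>2 * U t) + 3 * ((V t)\<^sup>2 * U t)" by (simp add: algebra_simps)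
    also have "\<dots> \<le> 3 * U t + 12 * (R\<^sup>2 * U t)
        + 3 * (16 * U t + \<beta> * R\<^sup>2 * U t + \<gamma> * PU t - (2 / (pi * a0)) * E2 t)"
      using bound2[of t] by simp
    also have "\<dots> = 51 * U t + \<Gamma> * (R\<^sup>2 * U t) + 3 * \<gamma> * PU t - (3 * (2 / (pi * a0))) * E2 t"
      unfolding \<Gamma>_def by (simp add: algebra_simps)
    also have "\<dots> \<le> (51 + \<Gamma>) * U t + (3 * \<gamma> + \<Gamma> * C_arc) * PU t - E t"
      using mult_left_mono[OF bound1[of t] Gamma_nonneg] unfolding E_def by (simp add: algebra_simps)
    also have "\<dots> \<le> estimate_constant \<sigma> a0 * (PU t + U t) - E t"
      using mult_right_mono[OF _ U_nonneg, of "51 + \<Gamma>" "estimate_constant \<sigma> a0" t]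
        mult_right_mono[OF _ PU_nonneg, of "3 * \<gamma> + \<Gamma> * C_arc" "estimate_constant \<sigma> a0" t]
        Gamma_nonneg gamma_nonneg C_arc_nonneg
      unfolding estimate_constant_eq by (simp add: algebra_simps)
    finally show ?thesis .
  qed
  moreover have "integrable lborel E" "integral\<^sup>L lborel E = 0"
    unfolding E_def using E1 E2 by simp_all
  ultimately show ?thesis by blast
qed

lemma integrable_U: "integrable lborel U"
proof -
  obtain M where Mu: "\<And>t. cmod (u t) \<le> M / (1 + t\<^sup>2)\<^sup>2" using schwartz_decay[OF u_schwartz] by metis
  have "U t \<le> (1 * M)\<^sup>2 / (1 + t\<^sup>2)" for t
  proof -
    have "cmod (u t) \<le> 1 * (1 + t\<^sup>2) * cmod (u t)"
      using mult_right_mono[of 1 "1 + t\<^sup>2" "cmod (u t)"] by simp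
    then show ?thesis unfolding U_def by (intro square_le_of_decay[OF _ _ Mu]) auto
  qed
  then show ?thesis
    by (intro integrable_by_inverse_square_bound[of _ "M\<^sup>2"])
       (auto simp: U_def intro!: continuous_intros cont_u)
qed

lemma integrable_PU: "integrable lborel PU"
proof -
  obtain M where Mu: "\<And>t. cmod (u t) \<le> M / (1 + t\<^sup>2)\<^sup>2" and MD: "\<And>t. cmod (D t) \<le> M / (1 + t\<^sup>2)\<^sup>2"
    using schwartz_decay[OF u_schwartz] unfolding D_def by metis
  define L where "L = 1 + A * (1 + Q)"
  have L: "L \<ge> 1" unfolding L_def using A_nonneg Q_nonneg by simp
  have "PU t \<le> (L * (2 * M))\<^sup>2 / (1 + t\<^sup>2)" for t
  proof -
    have p: "1 \<le> 1 + t\<^sup>2" by simp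
    have "b t \<le> A * (1 + Q * (1 + t\<^sup>2))"
      using b_le[of t] mult_left_mono[OF add_left_mono[OF N_square_le[of t], of 1] A_nonneg]
      by linarith
    also have "\<dots> \<le> L * (1 + t\<^sup>2)"
      unfolding L_def using A_nonneg Q_nonneg p by (simp add: algebra_simps mult_left_mono)
    finally have bL: "b t \<le> L * (1 + t\<^sup>2)" .
    have "cmod (P t) \<le> cmod (D t) / (2 * pi) + b t * cmod (u t)"
      using b_nonneg[of t] unfolding P_eq
      by (rule_tac order.trans[OF norm_triangle_ineq]) (simp add: norm_mult norm_divide)
    also have "\<dots> \<le> L * (1 + t\<^sup>2) * cmod (D t) + L * (1 + t\<^sup>2) * cmod (u t)"
    proof (intro add_mono mult_right_mono bL)
      have "cmod (D t) / (2 * pi) \<le> cmod (D t)"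
        using mult_left_mono[of 1 "2 * pi" "cmod (D t)"] pi_ge_two by (simp add: divide_le_eq)
      also have "\<dots> \<le> L * (1 + t\<^sup>2) * cmod (D t)"
        using mult_right_mono[of 1 "L * (1 + t\<^sup>2)" "cmod (D t)"] mult_mono[of 1 L 1 "1 + t\<^sup>2"] L p
        by simp
      finally show "cmod (D t) / (2 * pi) \<le> L * (1 + t\<^sup>2) * cmod (D t)" .
    qed simp
    finally have "cmod (P t) \<le> L * (1 + t\<^sup>2) * (cmod (u t) + cmod (D t))"
      by (simp add: algebra_simps)
    moreover have "cmod (u t) + cmod (D t) \<le> (2 * M) / (1 + t\<^sup>2)\<^sup>2" using Mu[of t] MD[of t] by simp
    ultimately show ?thesis
      unfolding PU_def using L by (intro square_le_of_decay[OF p]) auto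
  qed
  then show ?thesis
    by (intro integrable_by_inverse_square_bound[of _ "(L * (2 * M))\<^sup>2"])
       (auto simp: PU_def intro!: continuous_intros cont_P)
qed

lemma integrable_weighted_U: "integrable lborel (\<lambda>t. (W t)\<^sup>2 * U t)"
proof -
  obtain M where Mu: "\<And>t. cmod (u t) \<le> M / (1 + t\<^sup>2)\<^sup>2" using schwartz_decay[OF u_schwartz] by metis
  define L where "L = 2 + 2 * R + Q"
  have L: "L \<ge> 0" unfolding L_def using R_ge_1 Q_nonneg by simp
  have "(W t)\<^sup>2 * U t \<le> (L * M)\<^sup>2 / (1 + t\<^sup>2)" for t
  proof -
    have "W t \<le> 1 + 2 * R + (1 + Q * (1 + t\<^sup>2))"
      using jbr_powr_le_R V_le[of t] N_square_le[of t] unfolding W_eq by simp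
    also have "\<dots> \<le> L * (1 + t\<^sup>2)"
      unfolding L_def using R_ge_1 Q_nonneg by (simp add: algebra_simps)
    finally have "W t * cmod (u t) \<le> L * (1 + t\<^sup>2) * cmod (u t)" by (intro mult_right_mono) auto
    then have "(W t * cmod (u t))\<^sup>2 \<le> (L * M)\<^sup>2 / (1 + t\<^sup>2)"
      using W_nonneg[of t] L by (intro square_le_of_decay[OF _ _ Mu]) auto
    then show ?thesis unfolding U_def by (simp add: power_mult_distrib)
  qed
  moreover have "continuous_on UNIV W" unfolding W_eq[abs_def] by (intro continuous_intros cont_V)
  ultimately show ?thesis
    by (intro integrable_by_inverse_square_bound[of _ "(L * M)\<^sup>2"])
       (auto simp: U_def intro!: continuous_intros cont_u)
qed

(* The estimate for one instance: integrate the pointwise bound and use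
   sqrt (a + b) <= sqrt a + sqrt b. *)
lemma weighted_L2_estimate:
  "L2norm (\<lambda>t. complex_of_real (W t) * u t)
     \<le> sqrt (estimate_constant \<sigma> a0) * (L2norm (Ptilde \<sigma> a w x1 x2 \<xi>1 \<xi>2 u) + L2norm u)"
proof -
  define C where "C = estimate_constant \<sigma> a0"
  obtain E where E: "integrable lborel E" "integral\<^sup>L lborel E = 0"
    and bound: "\<And>t. (W t)\<^sup>2 * U t \<le> C * (PU t + U t) - E t"
    using weighted_pointwise_bound unfolding C_def by blast
  have C: "C \<ge> 0" unfolding C_def estimate_constant_eq
    using Gamma_nonneg gamma_nonneg C_arc_nonneg by simp
  have "integral\<^sup>L lborel (\<lambda>t. (W t)\<^sup>2 * U t) \<le> integral\<^sup>L lborel (\<lambda>t. C * (PU t + U t) - E t)"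
    using integrable_PU integrable_U E bound by (intro integral_mono integrable_weighted_U) auto
  also have "\<dots> = C * (integral\<^sup>L lborel PU + integral\<^sup>L lborel U)"
    using integrable_PU integrable_U E by simp
  finally have "sqrt (integral\<^sup>L lborel (\<lambda>t. (W t)\<^sup>2 * U t))
      \<le> sqrt (C * (integral\<^sup>L lborel PU + integral\<^sup>L lborel U))"
    by (rule real_sqrt_le_mono)
  also have "\<dots> = sqrt C * sqrt (integral\<^sup>L lborel PU + integral\<^sup>L lborel U)"
    by (rule real_sqrt_mult)
  also have "\<dots> \<le> sqrt C * (sqrt (integral\<^sup>L lborel PU) + sqrt (integral\<^sup>L lborel U))"
    using C by (intro mult_left_mono sqrt_add_le_add_sqrt integral_nonneg_AE) (auto simp: PU_def U_def)
  finally show ?thesis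
    unfolding L2norm_def C_def PU_def U_def P_def
    by (simp add: norm_mult power_mult_distrib)
qed

end

lemma smooth_fun_continuous: "smooth_fun f \<Longrightarrow> continuous_on UNIV f"
  unfolding smooth_fun_def
  by (metis continuous_at_imp_continuous_on differentiable_imp_continuous_within empty_subsetI
      iter_dderiv.simps(1) list.set(1))

lemma Cb_inf_bounded: "Cb_inf f \<Longrightarrow> bounded (range f)"
  unfolding Cb_inf_def using iter_dderiv.simps(1) by (metis empty_subsetI list.set(1))

lemma Cb_inf_symbol_bounded:
  fixes a :: "real \<Rightarrow> 'a::euclidean_space \<Rightarrow> 'a \<Rightarrow> real"
  assumes "Cb_inf (\<lambda>(t::real, \<xi>::'a, \<eta>::'a). a t \<xi> \<eta>)"
  obtains A where "\<And>t \<xi> \<eta>. \<bar>a t \<xi> \<eta>\<bar> \<le> A"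
proof -
  obtain A where "\<And>p. norm ((\<lambda>(t::real, \<xi>::'a, \<eta>::'a). a t \<xi> \<eta>) p) \<le> A"
    using Cb_inf_bounded[OF assms] by (auto simp: bounded_iff)
  from this[of "(_, _, _)"] show ?thesis by (intro that) simp
qed

lemma Cb_inf_symbol_continuous_on_line:
  fixes a :: "real \<Rightarrow> 'a::euclidean_space \<Rightarrow> 'a \<Rightarrow> real"
  assumes "Cb_inf (\<lambda>(t::real, \<xi>::'a, \<eta>::'a). a t \<xi> \<eta>)"
  shows "continuous_on UNIV (\<lambda>t. a t \<xi>2 (\<xi>1 + t *\<^sub>R \<xi>2))"
proof -
  have "continuous_on UNIV (\<lambda>(t::real, \<xi>::'a, \<eta>::'a). a t \<xi> \<eta>)"
    using assms unfolding Cb_inf_def by (auto intro: smooth_fun_continuous)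
  then have "continuous_on UNIV (\<lambda>t. (\<lambda>(t::real, \<xi>::'a, \<eta>::'a). a t \<xi> \<eta>) (t, \<xi>2, \<xi>1 + t *\<^sub>R \<xi>2))"
    by (rule continuous_on_compose2) (auto intro!: continuous_intros)
  then show ?thesis by simp
qed

(* The hypotheses of the theorem give an instance of the setting for every u and every
   choice of parameters; only the lower bound of a, the boundedness and continuity of a
   and w, and 0 <= w <= 1 are used. *)
theorem lemma1:
  fixes \<sigma> :: real and a :: "real \<Rightarrow> real^'n \<Rightarrow> real^'n \<Rightarrow> real" and w :: "real^'n \<Rightarrow> real"
  assumes "0 < \<sigma>" "\<sigma> < 1"
    and "Cb_inf (\<lambda>(t::real, \<xi>::real^'n, \<eta>::real^'n). a t \<xi> \<eta>)"
    and "\<exists>a0>0. \<forall>t \<xi> \<eta>. a t \<xi> \<eta> \<ge> a0"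
    and "smooth_fun w"
    and "\<forall>x. 0 \<le> w x \<and> w x \<le> 1"
    and "\<forall>x. norm x \<ge> 2 \<longrightarrow> w x = 1"
    and "\<forall>x. norm x \<le> 1 \<longrightarrow> w x = 0"
  shows "\<exists>C>0. \<forall>u x1 x2 \<xi>1 \<xi>2. schwartz u \<longrightarrow>
     L2norm (\<lambda>t. complex_of_real (1 + jbr x1 powr (2*\<sigma>/(2*\<sigma>+1)) + jbr (x2 - t *\<^sub>R x1) powr (2*\<sigma>)) * u t)
       \<le> C * (L2norm (Ptilde \<sigma> a w x1 x2 \<xi>1 \<xi>2 u) + L2norm u)"
proof -
  obtain a0 where a0: "a0 > 0" and a_lower: "\<And>t \<xi> \<eta>. a t \<xi> \<eta> \<ge> a0" using assms(4) by blast
  obtain A where a_upper: "\<And>t \<xi> \<eta>. \<bar>a t \<xi> \<eta>\<bar> \<le> A" using Cb_inf_symbol_bounded[OF assms(3)] by metis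
  show ?thesis
  proof (intro exI[of _ "sqrt (estimate_constant \<sigma> a0)"] conjI allI impI)
    show "sqrt (estimate_constant \<sigma> a0) > 0" using estimate_constant_pos[OF a0] by simp
    fix u x1 x2 \<xi>1 \<xi>2 assume "schwartz u"
    then interpret estimate_setting \<sigma> a0 A a w u x1 x2 \<xi>1 \<xi>2
      using assms(1,2,6) smooth_fun_continuous[OF assms(5)] a0 a_lower a_upper
        Cb_inf_symbol_continuous_on_line[OF assms(3)]
      by unfold_locales auto
    show "L2norm (\<lambda>t. complex_of_real (1 + jbr x1 powr (2*\<sigma>/(2*\<sigma>+1)) + jbr (x2 - t *\<^sub>R x1) powr (2*\<sigma>)) * u t)
       \<le> sqrt (estimate_constant \<sigma> a0) * (L2norm (Ptilde \<sigma> a w x1 x2 \<xi>1 \<xi>2 u) + L2norm u)"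
      using weighted_L2_estimate unfolding W_def .
  qed
qed

end
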